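(* Let $(\mathrm{A},\mathrm{A}',(\mathcal{S}_\tau)_{\tau\in\mathbb{R}},u)$ be a collision model and let $\sigma\in\mathsf{St}_1(\mathrm{A}')$ be any reference state. For $\tau\in\mathbb{R}$ put $\mathcal{C}_{\tau,\sigma}:=(\mathcal{I}_{\mathrm{A}}\otimes u)\circ\mathcal{S}_\tau\circ(\mathcal{I}_{\mathrm{A}}\otimes\sigma)\in\mathsf{Transf}(\mathrm{A}\to\mathrm{A})$ and $\mathcal{U}_{t,\sigma}:=\lim_{n\to\infty}(\mathcal{C}_{t/n,\sigma})^n$. Then for every $t$ the limit exists, $(\mathcal{U}_{t,\sigma})_{t\in\mathbb{R}}$ is a one-parameter subgroup of the Lie group $\mathsf{G}_{\mathrm{A}}$ of reversible transformations of $\mathrm{A}$, and $\mathcal{U}_{t,\sigma}=e^{G_\sigma t}$, where $G_\sigma:=(\mathcal{I}_{\mathrm{A}}\otimes u)\,\frac{\mathrm d\mathcal{S}_\tau}{\mathrm d\tau}\big|_{\tau=0}\,(\mathcal{I}_{\mathrm{A}}\otimes\sigma)$, i.e. $G_\sigma(\rho)=(\mathcal{I}_{\mathrm{A}}\otimes u)\frac{\mathrm d\mathcal{S}_\tau}{\mathrm d\tau}\big|_{\tau=0}(\rho\otimes\sigma)$.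
   Context: Setting: an operational probabilistic theory (OPT). There is a collection of systems, closed under a composition $\otimes$, with a trivial system $\mathrm{I}$ satisfying $\mathrm{A}\otimes\mathrm{I}=\mathrm{I}\otimes\mathrm{A}=\mathrm{A}$. For systems $\mathrm{A},\mathrm{B}$ there is a set $\mathsf{Transf}(\mathrm{A}\to\mathrm{B})$ of transformations, closed under sequential composition $\circ$ and parallel composition $\otimes$, containing identities $\mathcal{I}_{\mathrm{A}}$. Tests are finite collections of transformations (experiments with outcomes); the set of tests is closed under parallel/sequential composition and coarse-graining (summing transformations over a partition of outcomes). A transformation is deterministic if it forms a single-outcome test. States are $\mathsf{St}(\mathrm{A})=\mathsf{Transf}(\mathrm{I}\to\mathrm{A})$, effects $\mathsf{Eff}(\mathrm{A})=\mathsf{Transf}(\mathrm{A}\to\mathrm{I})$, and $\mathsf{St}_1,\mathsf{Eff}_1$ denote the deterministic ones; transformations $\mathrm{I}\to\mathrm{I}$ are identified with probabilities, and two transformations are identified if they give the same probabilities in all circuits. Each $\mathcal{T}\in\mathsf{Transf}(\mathrm{A}\to\mathrm{B})$ is identified with the family of linear maps induced by $\mathcal{T}\otimes\mathcal{I}_{\mathrm{E}}$ from $\mathsf{St}_{\mathbb{R}}(\mathrm{A}\otimes\mathrm{E})$ to $\mathsf{St}_{\mathbb{R}}(\mathrm{B}\otimes\mathrm{E})$ over all systems $\mathrm{E}$ ($\mathsf{St}_{\mathbb{R}}$ = real span of states), and these span a real vector space $\mathsf{Transf}_{\mathbb{R}}(\mathrm{A}\to\mathrm{B})$. Standing assumption: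 each $\mathsf{Transf}_{\mathbb{R}}(\mathrm{A}\to\mathrm{B})$ is finite-dimensional and $\mathsf{Transf}(\mathrm{A}\to\mathrm{B})$ is convex and closed in the operational norm (for states $\|\xi\|=\sup_{a\in\mathsf{Eff}}a(\xi)-\inf_{b\in\mathsf{Eff}}b(\xi)$; for transformations $\|\mathcal{T}\|_{op}=\sup_{\mathrm{E}}\sup_{\rho\in\mathsf{St}(\mathrm{A}\otimes\mathrm{E}),\|\rho\|\neq0}\|(\mathcal{T}\otimes\mathcal{I}_{\mathrm{E}})\rho\|/\|\rho\|$). A transformation is reversible if it has a two-sided inverse transformation; the reversible transformations $\mathrm{A}\to\mathrm{A}$ form a group $\mathsf{G}_{\mathrm{A}}$, which under these assumptions is a compact Lie group with a faithful finite-dimensional matrix representation, so derivatives of one-parameter subgroups are well-defined; $\mathfrak{g}_{\mathrm{A}}$ is its Lie algebra. A collision model is a tuple $(\mathrm{A},\mathrm{A}',(\mathcal{S}_\tau)_{\tau\in\mathbb{R}},u)$ with systems $\mathrm{A}$ (target) and $\mathrm{A}'$ (reference), a one-parameter subgroup $(\mathcal{S}_\tau)$ of $\mathsf{G}_{\mathrm{A}\otimes\mathrm{A}'}$, and a deterministic effect $u\in\mathsf{Eff}_1(\mathrm{A}')$. *)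

theory Defs
  imports "HOL-Analysis.Analysis"
begin

text \<open>All transformations (of all systems) live in one ambient
  real normed vector space 't; transf Th A B is the set Transf(A -> B), and its real
  span is Transf_R(A -> B).  seq is sequential composition (seq S T = S o T),
  par is parallel composition, ident A is the identity on A.
  Tests are finite lists of transformations (outcomes indexed by list position).\<close>

record ('s, 't) opt =
  tens  :: "'s \<Rightarrow> 's \<Rightarrow> 's"
  triv  :: 's
  transf :: "'s \<Rightarrow> 's \<Rightarrow> 't set"
  tests :: "'s \<Rightarrow> 's \<Rightarrow> 't list set"
  seq   :: "'t \<Rightarrow> 't \<Rightarrow> 't"
  par   :: "'t \<Rightarrow> 't \<Rightarrow> 't"
  ident :: "'s \<Rightarrow> 't"

definition det :: "('s, 't) opt \<Rightarrow> 's \<Rightarrow> 's \<Rightarrow> 't set" where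
  "det Th A B = {T. [T] \<in> tests Th A B}"

definition opt_axioms :: "('s, 't::real_normed_vector) opt \<Rightarrow> bool" where
  "opt_axioms Th \<longleftrightarrow>
     \<comment> \<open>trivial system\<close>
     (\<forall>A. tens Th A (triv Th) = A \<and> tens Th (triv Th) A = A) \<and>
     \<comment> \<open>closure of transformations, identities, category laws\<close>
     (\<forall>A. ident Th A \<in> transf Th A A) \<and>
     (\<forall>A B C T S. T \<in> transf Th A B \<longrightarrow> S \<in> transf Th B C \<longrightarrow> seq Th S T \<in> transf Th A C) \<and>
     (\<forall>A B C D T S. T \<in> transf Th A B \<longrightarrow> S \<in> transf Th C D \<longrightarrow>
          par Th T S \<in> transf Th (tens Th A C) (tens Th B D)) \<and>
     (\<forall>A B T. T \<in> transf Th A B \<longrightarrow> seq Th (ident Th B) T = T \<and> seq Th T (ident Th A) = T) \<and>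
     (\<forall>A B C D R S T. T \<in> transf Th A B \<longrightarrow> S \<in> transf Th B C \<longrightarrow> R \<in> transf Th C D \<longrightarrow>
          seq Th R (seq Th S T) = seq Th (seq Th R S) T) \<and>
     (\<forall>A B. par Th (ident Th A) (ident Th B) = ident Th (tens Th A B)) \<and>
     (\<forall>A B C A' B' C' T T' S S'. T \<in> transf Th A B \<longrightarrow> S \<in> transf Th B C \<longrightarrow>
          T' \<in> transf Th A' B' \<longrightarrow> S' \<in> transf Th B' C' \<longrightarrow>
          par Th (seq Th S T) (seq Th S' T') = seq Th (par Th S S') (par Th T T')) \<and>
     (\<forall>A B T. T \<in> transf Th A B \<longrightarrow>
          par Th T (ident Th (triv Th)) = T \<and> par Th (ident Th (triv Th)) T = T) \<and>
     \<comment> \<open>linear extension of the compositions\<close>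
     bilinear (seq Th) \<and> bilinear (par Th) \<and>
     \<comment> \<open>transformations I -> I are the probabilities\<close>
     ident Th (triv Th) \<noteq> 0 \<and>
     transf Th (triv Th) (triv Th) = {p *\<^sub>R ident Th (triv Th) | p. 0 \<le> p \<and> p \<le> 1} \<and>
     \<comment> \<open>tests: finite collections of transformations\<close>
     (\<forall>A B. transf Th A B = (\<Union>xs\<in>tests Th A B. set xs)) \<and>
     (\<forall>A B xs. xs \<in> tests Th A B \<longrightarrow> xs \<noteq> [] \<and> set xs \<subseteq> transf Th A B) \<and>
     (\<forall>xs. xs \<in> tests Th (triv Th) (triv Th) \<longrightarrow> sum_list xs = ident Th (triv Th)) \<and>
     (\<forall>A B C xs ys. xs \<in> tests Th A B \<longrightarrow> ys \<in> tests Th B C \<longrightarrow>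
          [seq Th y x. x \<leftarrow> xs, y \<leftarrow> ys] \<in> tests Th A C) \<and>
     (\<forall>A B C D xs ys. xs \<in> tests Th A B \<longrightarrow> ys \<in> tests Th C D \<longrightarrow>
          [par Th x y. x \<leftarrow> xs, y \<leftarrow> ys] \<in> tests Th (tens Th A C) (tens Th B D)) \<and>
     (\<forall>A B xs k g. xs \<in> tests Th A B \<longrightarrow> 0 < k \<longrightarrow> (\<forall>i<length xs. g i < k) \<longrightarrow>
          map (\<lambda>j. \<Sum>i\<in>{i. i < length xs \<and> g i = j}. xs ! i) [0..<k] \<in> tests Th A B) \<and>
     \<comment> \<open>standing assumptions: finite dimension, convexity, closedness\<close>
     (\<forall>A B. \<exists>F. finite F \<and> transf Th A B \<subseteq> span F) \<and>
     (\<forall>A B. convex (transf Th A B)) \<and>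
     (\<forall>A B. closed (transf Th A B))"

definition rev_group :: "('s, 't) opt \<Rightarrow> 's \<Rightarrow> 't set" where
  "rev_group Th A = {T \<in> transf Th A A. \<exists>S \<in> transf Th A A.
                        seq Th S T = ident Th A \<and> seq Th T S = ident Th A}"

definition one_param_subgroup :: "('s, 't::real_normed_vector) opt \<Rightarrow> 's \<Rightarrow> (real \<Rightarrow> 't) \<Rightarrow> bool" where
  "one_param_subgroup Th A U \<longleftrightarrow>
     (\<forall>t. U t \<in> rev_group Th A) \<and> (\<forall>s t. U (s + t) = seq Th (U s) (U t)) \<and> continuous_on UNIV U"

definition collision_model ::
  "('s, 't::real_normed_vector) opt \<Rightarrow> 's \<Rightarrow> 's \<Rightarrow> (real \<Rightarrow> 't) \<Rightarrow> 't \<Rightarrow> bool" where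
  "collision_model Th A A' S u \<longleftrightarrow>
     one_param_subgroup Th (tens Th A A') S \<and> u \<in> det Th A' (triv Th)"

primrec opow :: "('s, 't) opt \<Rightarrow> 's \<Rightarrow> 't \<Rightarrow> nat \<Rightarrow> 't" where
  "opow Th A X 0 = ident Th A"
| "opow Th A X (Suc n) = seq Th X (opow Th A X n)"

definition opt_exp :: "('s, 't::real_normed_vector) opt \<Rightarrow> 's \<Rightarrow> 't \<Rightarrow> 't" where
  "opt_exp Th A X = (\<Sum>n. (1 / fact n) *\<^sub>R opow Th A X n)"

definition collision_channel ::
  "('s, 't) opt \<Rightarrow> 's \<Rightarrow> (real \<Rightarrow> 't) \<Rightarrow> 't \<Rightarrow> 't \<Rightarrow> real \<Rightarrow> 't" where
  "collision_channel Th A S u \<sigma> \<tau> =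
     seq Th (par Th (ident Th A) u) (seq Th (S \<tau>) (par Th (ident Th A) \<sigma>))"

definition collision_generator ::
  "('s, 't::real_normed_vector) opt \<Rightarrow> 's \<Rightarrow> (real \<Rightarrow> 't) \<Rightarrow> 't \<Rightarrow> 't \<Rightarrow> 't" where
  "collision_generator Th A S u \<sigma> =
     seq Th (par Th (ident Th A) u) (seq Th (vector_derivative S (at 0)) (par Th (ident Th A) \<sigma>))"

end

(*
  The transformations A -> A span a finite-dimensional real algebra Transf_R(A -> A), on which
  sequential composition is a bounded bilinear product, so the usual analysis of matrix
  exponentials goes through there.  A continuous one-parameter group S is automatically
  differentiable: for small h the average (1/h) * integral_0^h S is invertible, with inverse N say,
  and S t = (integral_t^(t+h) S) N is differentiable in t.  Compressing with I (x) sigma and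
  I (x) u is linear and maps the identity to the identity, hence n (C_(t/n) - 1) -> t G.  A product
  formula -- Y_n^n -> exp Z whenever n (Y_n - 1) -> Z, proved by comparing the binomial expansion
  of (1 + Z/n)^n with the exponential series -- then gives C_(t/n)^n -> exp (t G).  The limits
  lie in the closed set Transf(A -> A), and exp ((s + t) G) = exp (s G) exp (t G), obtained from
  the product formula for the commuting factors 1 + s G/n and 1 + t G/n, makes them a continuous
  group of reversible transformations.
*)
theory Submission
  imports Defs
begin

section \<open>Finite-dimensional subspaces of a normed space\<close>

lemma Cauchy_dist_le_mult:
  fixes f :: "nat \<Rightarrow> 'a::metric_space" and g :: "nat \<Rightarrow> 'b::metric_space"
  assumes "Cauchy f" and "\<And>m n. dist (g m) (g n) \<le> L * dist (f m) (f n)"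
  shows "Cauchy g"
proof (rule metric_CauchyI)
  fix e :: real assume "0 < e"
  define L' where "L' = max L 1"
  have L': "L' > 0" "L \<le> L'" by (auto simp: L'_def)
  obtain M where M: "\<forall>m\<ge>M. \<forall>n\<ge>M. dist (f m) (f n) < e / L'"
    using metric_CauchyD[OF assms(1), of "e / L'"] \<open>0 < e\<close> L' by auto
  have "dist (g m) (g n) < e" if "M \<le> m" "M \<le> n" for m n
  proof -
    have "dist (g m) (g n) \<le> L' * dist (f m) (f n)"
      using assms(2)[of m n] mult_right_mono[OF L'(2) zero_le_dist[of "f m" "f n"]] by linarith
    also have "\<dots> < e" using M that L' by (simp add: pos_less_divide_eq mult.commute)
    finally show ?thesis .
  qed
  then show "\<exists>M. \<forall>m\<ge>M. \<forall>n\<ge>M. dist (g m) (g n) < e" by blast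
qed

lemma abs_mult_infdist_le_norm:
  fixes v :: "'a::real_normed_vector"
  assumes "subspace V" and "w \<in> V"
  shows "\<bar>a\<bar> * infdist v V \<le> norm (a *\<^sub>R v + w)"
proof (cases "a = 0")
  case False
  have "infdist v V \<le> norm (v + (1 / a) *\<^sub>R w)"
    using infdist_le[OF subspace_scale[OF assms, of "- 1 / a"], of v] by (simp add: dist_norm)
  then have "\<bar>a\<bar> * infdist v V \<le> norm (a *\<^sub>R (v + (1 / a) *\<^sub>R w))"
    by (simp add: mult_left_mono)
  also have "a *\<^sub>R (v + (1 / a) *\<^sub>R w) = a *\<^sub>R v + w"
    using False by (simp add: scaleR_add_right)
  finally show ?thesis .
qed simp

lemma infdist_span_pos:
  fixes v :: "'a::real_normed_vector"
  assumes "closed (span F)" and "v \<notin> span F"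
  shows "infdist v (span F) > 0"
  by (rule infdist_pos_not_in_closed[OF assms(1) _ assms(2)]) (use span_zero in blast)

lemma complete_span_insert:
  fixes v :: "'a::real_normed_vector"
  assumes F: "complete (span F)" and v: "v \<notin> span F"
  shows "complete (span (insert v F))"
proof (rule completeI)
  fix f assume f: "\<forall>n. f n \<in> span (insert v F)" "Cauchy f"
  define \<delta> where "\<delta> = infdist v (span F)"
  have "\<delta> > 0" unfolding \<delta>_def by (rule infdist_span_pos[OF complete_imp_closed[OF F] v])
  have "\<forall>n. \<exists>a. f n - a *\<^sub>R v \<in> span F" using f(1) span_breakdown_eq by blast
  then obtain a where a: "\<And>n. f n - a n *\<^sub>R v \<in> span F" by metis
  define w where "w n = f n - a n *\<^sub>R v" for n
  have w: "w n \<in> span F" for n using a by (simp add: w_def)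
  have f_eq: "f m - f n = (a m - a n) *\<^sub>R v + (w m - w n)" for m n
    by (simp add: w_def algebra_simps)
  have dist_a: "dist (a m) (a n) \<le> (1 / \<delta>) * dist (f m) (f n)" for m n
    using abs_mult_infdist_le_norm[OF subspace_span span_diff[OF w w], of "a m - a n" v] \<open>\<delta> > 0\<close>
    by (simp add: f_eq dist_norm dist_real_def \<delta>_def field_simps)
  have dist_w: "dist (w m) (w n) \<le> (1 + norm v / \<delta>) * dist (f m) (f n)" for m n
  proof -
    have "norm (w m - w n) \<le> norm (f m - f n) + \<bar>a m - a n\<bar> * norm v"
      using norm_triangle_ineq4[of "f m - f n" "(a m - a n) *\<^sub>R v"] by (simp add: f_eq)
    also have "\<bar>a m - a n\<bar> * norm v \<le> (1 / \<delta>) * dist (f m) (f n) * norm v"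
      using mult_right_mono[OF dist_a[of m n] norm_ge_zero[of v]] by (simp add: dist_real_def)
    finally show ?thesis by (simp add: dist_norm algebra_simps)
  qed
  obtain \<alpha> where \<alpha>: "a \<longlonglongrightarrow> \<alpha>"
    using Cauchy_dist_le_mult[OF f(2) dist_a] Cauchy_convergent_iff convergent_def by blast
  obtain \<omega> where \<omega>: "\<omega> \<in> span F" "w \<longlonglongrightarrow> \<omega>"
    using completeE[OF F _ Cauchy_dist_le_mult[OF f(2) dist_w]] w by blast
  have "f = (\<lambda>n. a n *\<^sub>R v + w n)" by (auto simp: w_def)
  also have "\<dots> \<longlonglongrightarrow> \<alpha> *\<^sub>R v + \<omega>" by (intro tendsto_intros \<alpha> \<omega>(2))
  finally have "f \<longlonglongrightarrow> \<alpha> *\<^sub>R v + \<omega>" .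
  moreover have "\<alpha> *\<^sub>R v \<in> span (insert v F)" by (simp add: span_base span_scale)
  moreover have "\<omega> \<in> span (insert v F)" using \<omega>(1) span_mono[OF subset_insertI] by blast
  ultimately show "\<exists>l\<in>span (insert v F). f \<longlonglongrightarrow> l" using span_add by blast
qed

lemma complete_span_finite:
  fixes F :: "'a::real_normed_vector set"
  assumes "finite F"
  shows "complete (span F)"
  using assms
proof (induction F rule: finite_induct)
  case empty
  show ?case by (simp add: compact_imp_complete)
next
  case (insert v F)
  then show ?case by (cases "v \<in> span F") (simp_all add: span_redundant complete_span_insert)
qed

lemma span_insert_split_bound:
  fixes v :: "'a::real_normed_vector"
  assumes "closed (span F)"
  obtains C where "C \<ge> 0"
    "\<And>x. x \<in> span (insert v F) \<Longrightarrow>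
       \<exists>a. x - a *\<^sub>R v \<in> span F \<and> \<bar>a\<bar> \<le> C * norm x \<and> norm (x - a *\<^sub>R v) \<le> C * norm x"
proof (cases "v \<in> span F")
  case True
  show ?thesis
  proof (rule that[of 1])
    fix x assume "x \<in> span (insert v F)"
    then have "x - 0 *\<^sub>R v \<in> span F" using True by (simp add: span_redundant)
    then show "\<exists>a. x - a *\<^sub>R v \<in> span F \<and> \<bar>a\<bar> \<le> 1 * norm x \<and> norm (x - a *\<^sub>R v) \<le> 1 * norm x"
      by (intro exI[of _ 0]) simp
  qed simp
next
  case False
  define \<delta> where "\<delta> = infdist v (span F)"
  have "\<delta> > 0" unfolding \<delta>_def by (rule infdist_span_pos[OF assms False])
  define C where "C = 1 + (1 + norm v) / \<delta>"
  show ?thesis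
  proof (rule that[of C])
    show "C \<ge> 0" using \<open>\<delta> > 0\<close> by (simp add: C_def)
    fix x assume "x \<in> span (insert v F)"
    then obtain a where w: "x - a *\<^sub>R v \<in> span F" using span_breakdown_eq by blast
    have "\<bar>a\<bar> * \<delta> \<le> norm x"
      using abs_mult_infdist_le_norm[OF subspace_span w, of a v] by (simp add: \<delta>_def mult.commute)
    then have a: "\<bar>a\<bar> \<le> norm x / \<delta>" using \<open>\<delta> > 0\<close> by (simp add: pos_le_divide_eq)
    have "norm (x - a *\<^sub>R v) \<le> norm x + \<bar>a\<bar> * norm v" using norm_triangle_ineq4[of x "a *\<^sub>R v"] by simp
    also have "\<dots> \<le> norm x + norm x / \<delta> * norm v" using mult_right_mono[OF a norm_ge_zero[of v]] by simp
    also have "\<dots> \<le> C * norm x" using \<open>\<delta> > 0\<close> by (simp add: C_def field_simps)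
    finally have "norm (x - a *\<^sub>R v) \<le> C * norm x" .
    moreover have "\<bar>a\<bar> \<le> C * norm x"
    proof -
      have "norm x / \<delta> \<le> (1 + norm v) * norm x / \<delta>"
        using \<open>\<delta> > 0\<close> by (intro divide_right_mono) (simp_all add: algebra_simps)
      also have "\<dots> \<le> C * norm x" by (simp add: C_def algebra_simps)
      finally show ?thesis using a by linarith
    qed
    ultimately show "\<exists>a. x - a *\<^sub>R v \<in> span F \<and> \<bar>a\<bar> \<le> C * norm x \<and> norm (x - a *\<^sub>R v) \<le> C * norm x"
      using w by blast
  qed
qed

lemma span_finite_coefficient_bound:
  fixes F :: "'a::real_normed_vector set"
  assumes "finite F"
  obtains C where "C \<ge> 0"
    "\<And>x. x \<in> span F \<Longrightarrow> \<exists>c. x = (\<Sum>v\<in>F. c v *\<^sub>R v) \<and> (\<forall>v\<in>F. \<bar>c v\<bar> \<le> C * norm x)"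
  using assms
proof (induction F arbitrary: thesis rule: finite_induct)
  case empty
  then show ?case by (auto intro: exI[of _ 0])
next
  case (insert v F)
  obtain C where C: "C \<ge> 0"
    "\<And>x. x \<in> span F \<Longrightarrow> \<exists>c. x = (\<Sum>v\<in>F. c v *\<^sub>R v) \<and> (\<forall>v\<in>F. \<bar>c v\<bar> \<le> C * norm x)"
    using insert.IH by blast
  obtain C1 where C1: "C1 \<ge> 0"
    "\<And>x. x \<in> span (insert v F) \<Longrightarrow>
       \<exists>a. x - a *\<^sub>R v \<in> span F \<and> \<bar>a\<bar> \<le> C1 * norm x \<and> norm (x - a *\<^sub>R v) \<le> C1 * norm x"
    using span_insert_split_bound[OF complete_imp_closed[OF complete_span_finite[OF insert.hyps(1)]]]
    by blast
  show ?case
  proof (rule insert.prems[of "max C1 (C * C1)"])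
    show "max C1 (C * C1) \<ge> 0" using C1(1) by simp
    fix x assume "x \<in> span (insert v F)"
    then obtain a where a: "x - a *\<^sub>R v \<in> span F" "\<bar>a\<bar> \<le> C1 * norm x"
      "norm (x - a *\<^sub>R v) \<le> C1 * norm x"
      using C1(2) by blast
    obtain c where c: "x - a *\<^sub>R v = (\<Sum>u\<in>F. c u *\<^sub>R u)"
      "\<And>u. u \<in> F \<Longrightarrow> \<bar>c u\<bar> \<le> C * norm (x - a *\<^sub>R v)"
      using C(2)[OF a(1)] by blast
    have "x = (\<Sum>u\<in>insert v F. (c(v := a)) u *\<^sub>R u)"
    proof -
      have "(\<Sum>u\<in>F. (c(v := a)) u *\<^sub>R u) = (\<Sum>u\<in>F. c u *\<^sub>R u)"
        using insert.hyps(2) by (intro sum.cong) auto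
      then show ?thesis using c(1) insert.hyps by (simp add: algebra_simps)
    qed
    moreover have "\<bar>c u\<bar> \<le> max C1 (C * C1) * norm x" if "u \<in> F" for u
    proof -
      have "\<bar>c u\<bar> \<le> C * (C1 * norm x)" using c(2)[OF that] mult_left_mono[OF a(3) C(1)] by linarith
      also have "\<dots> \<le> max C1 (C * C1) * norm x" by (simp add: mult_right_mono flip: mult.assoc)
      finally show ?thesis .
    qed
    moreover have "\<bar>a\<bar> \<le> max C1 (C * C1) * norm x"
      using a(2) mult_right_mono[OF max.cobounded1 norm_ge_zero] by (rule order_trans)
    ultimately show "\<exists>c. x = (\<Sum>u\<in>insert v F. c u *\<^sub>R u) \<and> (\<forall>u\<in>insert v F. \<bar>c u\<bar> \<le> max C1 (C * C1) * norm x)"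
      using insert.hyps by (intro exI[of _ "c(v := a)"]) auto
  qed
qed

lemma representation_norm_bound:
  fixes B :: "'a::real_normed_vector set"
  assumes "finite B" and "independent B"
  obtains C where "C \<ge> 0" "\<And>x u. x \<in> span B \<Longrightarrow> \<bar>representation B x u\<bar> \<le> C * norm x"
proof -
  obtain C where C: "C \<ge> 0"
    "\<And>x. x \<in> span B \<Longrightarrow> \<exists>c. x = (\<Sum>v\<in>B. c v *\<^sub>R v) \<and> (\<forall>v\<in>B. \<bar>c v\<bar> \<le> C * norm x)"
    using span_finite_coefficient_bound[OF assms(1)] by blast
  have "\<bar>representation B x u\<bar> \<le> C * norm x" if x: "x \<in> span B" for x u
  proof -
    obtain c where c: "x = (\<Sum>v\<in>B. c v *\<^sub>R v)" "\<forall>v\<in>B. \<bar>c v\<bar> \<le> C * norm x"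
      using C(2)[OF x] by blast
    define c' where "c' v = (if v \<in> B then c v else 0)" for v
    have supp: "{v. c' v \<noteq> 0} \<subseteq> B" by (auto simp: c'_def)
    have "representation B x = c'"
    proof (rule representation_eqI[OF assms(2) x])
      show "finite {v. c' v \<noteq> 0}" using finite_subset[OF supp assms(1)] .
      have "(\<Sum>v | c' v \<noteq> 0. c' v *\<^sub>R v) = (\<Sum>v\<in>B. c' v *\<^sub>R v)"
        using supp assms(1) by (intro sum.mono_neutral_left) auto
      then show "(\<Sum>v | c' v \<noteq> 0. c' v *\<^sub>R v) = x" by (simp add: c(1) c'_def)
    qed (use supp in auto)
    then show ?thesis using c(2) C(1) by (simp add: c'_def)
  qed
  with C(1) that show thesis by blast
qed

lemma linear_bound_on_span_finite:
  fixes f :: "'a::real_normed_vector \<Rightarrow> 'b::real_normed_vector"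
  assumes "finite F" and "linear f"
  obtains K where "K \<ge> 0" "\<And>x. x \<in> span F \<Longrightarrow> norm (f x) \<le> K * norm x"
proof -
  obtain C where C: "C \<ge> 0"
    "\<And>x. x \<in> span F \<Longrightarrow> \<exists>c. x = (\<Sum>v\<in>F. c v *\<^sub>R v) \<and> (\<forall>v\<in>F. \<bar>c v\<bar> \<le> C * norm x)"
    using span_finite_coefficient_bound[OF assms(1)] by blast
  have "norm (f x) \<le> (C * (\<Sum>v\<in>F. norm (f v))) * norm x" if x: "x \<in> span F" for x
  proof -
    obtain c where c: "x = (\<Sum>v\<in>F. c v *\<^sub>R v)" "\<forall>v\<in>F. \<bar>c v\<bar> \<le> C * norm x"
      using C(2)[OF x] by blast
    have "norm (f x) = norm (\<Sum>v\<in>F. c v *\<^sub>R f v)"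
      by (simp add: c(1) linear_sum[OF assms(2)] linear_scale[OF assms(2)])
    also have "\<dots> \<le> (\<Sum>v\<in>F. \<bar>c v\<bar> * norm (f v))" by (rule norm_sum[THEN order_trans]) simp
    also have "\<dots> \<le> (\<Sum>v\<in>F. C * norm x * norm (f v))"
      using c(2) by (intro sum_mono mult_right_mono) auto
    finally show ?thesis by (simp add: sum_distrib_left mult_ac)
  qed
  then show thesis using C(1) by (intro that[of "C * (\<Sum>v\<in>F. norm (f v))"]) (simp_all add: sum_nonneg)
qed

lemma bilinear_bound_on_span_finite:
  fixes h :: "'a::real_normed_vector \<Rightarrow> 'a \<Rightarrow> 'b::real_normed_vector"
  assumes "finite F" and "bilinear h"
  obtains K where "K \<ge> 0" "\<And>x y. x \<in> span F \<Longrightarrow> y \<in> span F \<Longrightarrow> norm (h x y) \<le> K * norm x * norm y"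
proof -
  have "\<forall>v. \<exists>K\<ge>0. \<forall>y\<in>span F. norm (h v y) \<le> K * norm y"
    using linear_bound_on_span_finite[OF assms(1)] assms(2) unfolding bilinear_def by metis
  then obtain Kv where Kv: "\<And>v. Kv v \<ge> 0" "\<And>v y. y \<in> span F \<Longrightarrow> norm (h v y) \<le> Kv v * norm y"
    by metis
  obtain Kx where Kx: "Kx \<ge> 0" "\<And>x. x \<in> span F \<Longrightarrow> \<exists>c. x = (\<Sum>v\<in>F. c v *\<^sub>R v) \<and> (\<forall>v\<in>F. \<bar>c v\<bar> \<le> Kx * norm x)"
    using span_finite_coefficient_bound[OF assms(1)] by blast
  have "norm (h x y) \<le> (Kx * (\<Sum>v\<in>F. Kv v)) * norm x * norm y"
    if x: "x \<in> span F" and y: "y \<in> span F" for x y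
  proof -
    obtain c where c: "x = (\<Sum>v\<in>F. c v *\<^sub>R v)" "\<forall>v\<in>F. \<bar>c v\<bar> \<le> Kx * norm x"
      using Kx(2)[OF x] by blast
    have lin: "linear (\<lambda>x. h x y)" using assms(2) unfolding bilinear_def by blast
    have "norm (h x y) = norm (\<Sum>v\<in>F. c v *\<^sub>R h v y)"
      by (simp add: c(1) linear_sum[OF lin] linear_scale[OF lin])
    also have "\<dots> \<le> (\<Sum>v\<in>F. \<bar>c v\<bar> * norm (h v y))" by (rule norm_sum[THEN order_trans]) simp
    also have "\<dots> \<le> (\<Sum>v\<in>F. (Kx * norm x) * (Kv v * norm y))"
      using c(2) Kv y by (intro sum_mono mult_mono) auto
    finally show ?thesis by (simp add: sum_distrib_left sum_distrib_right mult_ac)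
  qed
  then show thesis using Kx(1) Kv(1) by (intro that[of "Kx * (\<Sum>v\<in>F. Kv v)"]) (simp_all add: sum_nonneg)
qed

lemma tendsto_linear_on_span_finite:
  fixes f :: "'a::real_normed_vector \<Rightarrow> 'b::real_normed_vector"
  assumes "finite F" "linear f" "(g \<longlongrightarrow> l) G" "\<forall>\<^sub>F x in G. g x \<in> span F" "l \<in> span F"
  shows "((\<lambda>x. f (g x)) \<longlongrightarrow> f l) G"
proof -
  obtain K where K: "K \<ge> 0" "\<And>x. x \<in> span F \<Longrightarrow> norm (f x) \<le> K * norm x"
    using linear_bound_on_span_finite[OF assms(1,2)] by blast
  have "\<forall>\<^sub>F x in G. norm (f (g x) - f l) \<le> K * norm (g x - l)"
    using assms(4) by eventually_elim (use K(2) assms(5) in \<open>simp add: span_diff flip: linear_diff[OF assms(2)]\<close>)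
  moreover have "((\<lambda>x. K * norm (g x - l)) \<longlongrightarrow> 0) G"
    using tendsto_mult_right_zero[OF tendsto_norm_zero[OF LIM_zero[OF assms(3)]]] .
  ultimately have "((\<lambda>x. f (g x) - f l) \<longlongrightarrow> 0) G" by (rule Lim_null_comparison)
  then show ?thesis by (rule LIM_zero_cancel)
qed

lemma tendsto_representation:
  fixes B :: "'a::real_normed_vector set"
  assumes "finite B" "independent B" "(g \<longlongrightarrow> l) G" "\<forall>\<^sub>F x in G. g x \<in> span B" "l \<in> span B"
  shows "((\<lambda>x. representation B (g x) u) \<longlongrightarrow> representation B l u) G"
proof -
  obtain C where C: "C \<ge> 0" "\<And>x u. x \<in> span B \<Longrightarrow> \<bar>representation B x u\<bar> \<le> C * norm x"
    using representation_norm_bound[OF assms(1,2)] by blast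
  have "\<forall>\<^sub>F x in G. norm (representation B (g x) u - representation B l u) \<le> C * norm (g x - l)"
    using assms(4)
  proof eventually_elim
    case (elim x)
    then show ?case
      using C(2)[OF span_diff[OF elim assms(5)]] by (simp add: representation_diff[OF assms(2,5) elim])
  qed
  moreover have "((\<lambda>x. C * norm (g x - l)) \<longlongrightarrow> 0) G"
    using tendsto_mult_right_zero[OF tendsto_norm_zero[OF LIM_zero[OF assms(3)]]] .
  ultimately have "((\<lambda>x. representation B (g x) u - representation B l u) \<longlongrightarrow> 0) G"
    by (rule Lim_null_comparison)
  then show ?thesis by (rule LIM_zero_cancel)
qed

lemma linear_inj_on_span_imp_surj_on:
  fixes f :: "'a::real_vector \<Rightarrow> 'a"
  assumes "finite B" "independent B" "linear f" "f ` span B \<subseteq> span B" "inj_on f (span B)"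
  shows "f ` span B = span B"
proof -
  have fB: "f ` B \<subseteq> span B" using assms(4) span_superset by blast
  have indep: "independent (f ` B)"
    using real_vector.linear_independent_injective_image[OF assms(3,2,5)] .
  have card: "card (f ` B) = card B"
    using card_image[OF inj_on_subset[OF assms(5) span_superset]] .
  have "y \<in> span (f ` B)" if y: "y \<in> span B" for y
  proof (rule ccontr)
    assume y': "y \<notin> span (f ` B)"
    have y_notin: "y \<notin> f ` B" using y' span_superset[of "f ` B"] by blast
    have "independent (insert y (f ` B))" using indep y' y_notin by (simp add: independent_insert)
    moreover have "insert y (f ` B) \<subseteq> span B" using fB y by simp
    ultimately have "card (insert y (f ` B)) \<le> card B"
      using independent_span_bound[OF assms(1)] by blast
    then show False using assms(1) card y_notin by simp
  qed
  then show ?thesis using assms(4) by (auto simp: span_linear_image[OF assms(3)])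
qed

section \<open>Integration of curves in a finite-dimensional span\<close>

lemma has_real_derivative_integral_window:
  fixes g :: "real \<Rightarrow> real"
  assumes "continuous_on UNIV g" and "0 \<le> h"
  shows "((\<lambda>t. integral {t..t + h} g) has_real_derivative g (x + h) - g x) (at x)"
proof -
  define a where "a = x - 1"
  define G where "G y = integral {a..y} g" for y
  have G': "(G has_real_derivative g y) (at y)" if "a < y" for y
  proof -
    have "(G has_real_derivative g y) (at y within {a..y + 1})"
      unfolding G_def using that
      by (intro integral_has_real_derivative continuous_on_subset[OF assms(1)]) auto
    then show ?thesis using that by (simp add: at_within_Icc_at)
  qed
  have "((\<lambda>t. G (t + h) - G t) has_real_derivative g (x + h) - g x) (at x)"
    using G'[of "x + h"] G'[of x] assms(2)
    by (intro DERIV_diff DERIV_shift[THEN iffD1]) (auto simp: a_def)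
  then show ?thesis
  proof (rule has_field_derivative_transform_within_open[where S = "{a<..}"])
    fix t assume "t \<in> {a<..}"
    then show "G (t + h) - G t = integral {t..t + h} g"
      unfolding G_def using Henstock_Kurzweil_Integration.integral_combine[where a = a and c = t and b = "t + h" and f = g] assms
      by (simp add: integrable_continuous_real continuous_on_subset)
  qed (auto simp: a_def)
qed

lemma tendsto_integral_average:
  fixes g :: "real \<Rightarrow> real"
  assumes "continuous_on UNIV g"
  shows "((\<lambda>h. integral {0..h} g / h) \<longlongrightarrow> g 0) (at_right 0)"
proof -
  have "((\<lambda>h. integral {0..h} g) has_real_derivative g 0) (at 0 within {0..1})"
    by (intro integral_has_real_derivative continuous_on_subset[OF assms]) auto
  then show ?thesis
    by (simp add: has_field_derivative_iff at_within_Icc_at_right)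
qed

lemma continuous_on_linear_span_finite:
  fixes L :: "'a::real_normed_vector \<Rightarrow> 'b::real_normed_vector"
  assumes "finite B" "linear L" "continuous_on UNIV f" "\<And>s. f s \<in> span B"
  shows "continuous_on UNIV (\<lambda>s. L (f s))"
proof -
  have "(\<lambda>s. L (f s)) \<midarrow>x\<rightarrow> L (f x)" for x
    using assms(3) by (intro tendsto_linear_on_span_finite[OF assms(1,2)])
      (use assms(3) in \<open>simp_all add: continuous_on_def assms(4)\<close>)
  then show ?thesis by (simp add: continuous_on_def)
qed

lemma continuous_on_representation:
  fixes B :: "'a::real_normed_vector set"
  assumes "finite B" "independent B" "continuous_on UNIV f" "\<And>s. f s \<in> span B"
  shows "continuous_on UNIV (\<lambda>s. representation B (f s) u)"
proof -
  have "(\<lambda>s. representation B (f s) u) \<midarrow>x\<rightarrow> representation B (f x) u" for x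
    using assms(3) by (intro tendsto_representation[OF assms(1,2)])
      (use assms(3) in \<open>simp_all add: continuous_on_def assms(4)\<close>)
  then show ?thesis by (simp add: continuous_on_def)
qed

text \<open>The ambient space need not be complete, so a curve in the span of a finite independent set
  \<open>B\<close> is integrated coordinatewise.\<close>

definition span_integral :: "'a::real_normed_vector set \<Rightarrow> (real \<Rightarrow> 'a) \<Rightarrow> real \<Rightarrow> real \<Rightarrow> 'a" where
  "span_integral B f a b = (\<Sum>u\<in>B. integral {a..b} (\<lambda>s. representation B (f s) u) *\<^sub>R u)"

lemma span_integral_in_span: "span_integral B f a b \<in> span B"
  unfolding span_integral_def by (intro span_sum span_scale span_base)

lemma span_integral_shift:
  "span_integral B (\<lambda>s. f (s + t)) a b = span_integral B f (a + t) (b + t)"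
  unfolding span_integral_def
  using integral_shift_Icc_real[of a b "\<lambda>s. representation B (f s) _" t]
  by (simp add: o_def add.commute)

lemma span_integral_linear_image:
  fixes B :: "'a::real_normed_vector set"
  assumes B: "finite B" "independent B" and f: "continuous_on UNIV f" "\<And>s. f s \<in> span B"
    and L: "linear L" "\<And>x. x \<in> span B \<Longrightarrow> L x \<in> span B"
  shows "L (span_integral B f a b) = span_integral B (\<lambda>s. L (f s)) a b"
proof -
  let ?c = "representation B"
  define I where "I v = integral {a..b} (\<lambda>s. ?c (f s) v)" for v
  have Lf: "?c (L (f s)) u = (\<Sum>v\<in>B. ?c (f s) v * ?c (L v) u)" for s u
  proof -
    have Lv: "L v \<in> span B" if "v \<in> B" for v using L(2) span_base that by blast
    have "L (f s) = L (\<Sum>v\<in>B. ?c (f s) v *\<^sub>R v)"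
      using sum_representation_eq[OF B(2) f(2) B(1) order_refl, of s] by simp
    also have "\<dots> = (\<Sum>v\<in>B. ?c (f s) v *\<^sub>R L v)"
      by (simp add: linear_sum[OF L(1)] linear_scale[OF L(1)])
    finally have "?c (L (f s)) u = (\<Sum>v\<in>B. ?c (?c (f s) v *\<^sub>R L v) u)"
      using representation_sum[OF B(2), of B "\<lambda>v. ?c (f s) v *\<^sub>R L v"] Lv by (simp add: span_scale)
    also have "\<dots> = (\<Sum>v\<in>B. ?c (f s) v * ?c (L v) u)"
      using Lv by (simp add: representation_scale[OF B(2)])
    finally show ?thesis .
  qed
  have int: "(\<lambda>s. ?c (f s) v) integrable_on {a..b}" for v
    by (rule integrable_continuous_real continuous_on_subset[OF continuous_on_representation[OF B f] subset_UNIV])+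
  have "integral {a..b} (\<lambda>s. ?c (L (f s)) u) = (\<Sum>v\<in>B. I v * ?c (L v) u)" for u
    unfolding Lf I_def
    by (subst integral_sum[OF B(1)]) (simp_all add: int integrable_on_mult_left flip: integral_mult_left)
  then have "span_integral B (\<lambda>s. L (f s)) a b = (\<Sum>u\<in>B. \<Sum>v\<in>B. (I v * ?c (L v) u) *\<^sub>R u)"
    by (simp add: span_integral_def scaleR_sum_left)
  also have "\<dots> = (\<Sum>v\<in>B. I v *\<^sub>R (\<Sum>u\<in>B. ?c (L v) u *\<^sub>R u))"
    by (subst sum.swap) (simp add: scaleR_sum_right)
  also have "\<dots> = (\<Sum>v\<in>B. I v *\<^sub>R L v)"
    using sum_representation_eq[OF B(2) L(2)[OF span_base] B(1) order_refl] by simp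
  also have "\<dots> = L (span_integral B f a b)"
    by (simp add: span_integral_def I_def linear_sum[OF L(1)] linear_scale[OF L(1)])
  finally show ?thesis ..
qed

lemma has_vector_derivative_span_integral_window:
  fixes B :: "'a::real_normed_vector set"
  assumes B: "finite B" "independent B" and f: "continuous_on UNIV f" "\<And>s. f s \<in> span B"
    and "0 \<le> h"
  shows "((\<lambda>t. span_integral B f t (t + h)) has_vector_derivative f (x + h) - f x) (at x)"
proof -
  let ?c = "representation B"
  have "((\<lambda>t. integral {t..t + h} (\<lambda>s. ?c (f s) u) *\<^sub>R u) has_vector_derivative
          (?c (f (x + h)) u - ?c (f x) u) *\<^sub>R u) (at x)" for u
    using has_vector_derivative_scaleR[OF has_real_derivative_integral_window[OF
          continuous_on_representation[OF B f] \<open>0 \<le> h\<close>] has_vector_derivative_const]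
    by simp
  then have "((\<lambda>t. span_integral B f t (t + h)) has_vector_derivative
          (\<Sum>u\<in>B. (?c (f (x + h)) u - ?c (f x) u) *\<^sub>R u)) (at x)"
    unfolding span_integral_def by (intro has_vector_derivative_sum)
  also have "(\<Sum>u\<in>B. (?c (f (x + h)) u - ?c (f x) u) *\<^sub>R u) = f (x + h) - f x"
    using sum_representation_eq[OF B(2) f(2) B(1) order_refl]
    by (simp add: scaleR_diff_left sum_subtractf)
  finally show ?thesis .
qed

lemma tendsto_span_integral_average:
  fixes B :: "'a::real_normed_vector set"
  assumes B: "finite B" "independent B" and f: "continuous_on UNIV f" "\<And>s. f s \<in> span B"
  shows "((\<lambda>h. (1 / h) *\<^sub>R span_integral B f 0 h) \<longlongrightarrow> f 0) (at_right 0)"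
proof -
  let ?c = "representation B"
  have "((\<lambda>h. \<Sum>u\<in>B. (integral {0..h} (\<lambda>s. ?c (f s) u) / h) *\<^sub>R u) \<longlongrightarrow> (\<Sum>u\<in>B. ?c (f 0) u *\<^sub>R u))
          (at_right 0)"
    by (intro tendsto_sum tendsto_scaleR tendsto_const tendsto_integral_average
        continuous_on_representation[OF B f])
  then show ?thesis
    using sum_representation_eq[OF B(2) f(2) B(1) order_refl]
    by (simp add: span_integral_def scaleR_sum_right)
qed

lemma sum_choose_Suc_scaleR:
  fixes p :: "nat \<Rightarrow> 'a::real_vector"
  shows "(\<Sum>k\<le>Suc n. real (Suc n choose k) *\<^sub>R p k)
       = (\<Sum>k\<le>n. real (n choose k) *\<^sub>R p k) + (\<Sum>k\<le>n. real (n choose k) *\<^sub>R p (Suc k))"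
proof -
  have "(\<Sum>k\<le>n. real (n choose k) *\<^sub>R p k) = p 0 + (\<Sum>k<n. real (n choose Suc k) *\<^sub>R p (Suc k))"
    by (simp add: lessThan_Suc_atMost[symmetric] sum.lessThan_Suc_shift del: sum.lessThan_Suc)
  also have "(\<Sum>k<n. real (n choose Suc k) *\<^sub>R p (Suc k)) = (\<Sum>k\<le>n. real (n choose Suc k) *\<^sub>R p (Suc k))"
    by (simp add: lessThan_Suc_atMost[symmetric])
  finally have shift: "(\<Sum>k\<le>n. real (n choose k) *\<^sub>R p k)
      = p 0 + (\<Sum>k\<le>n. real (n choose Suc k) *\<^sub>R p (Suc k))" .
  show ?thesis
    unfolding shift sum.atMost_Suc_shift
    by (simp add: scaleR_add_left sum.distrib algebra_simps del: sum.atMost_Suc)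
qed

lemma norm_sums_le_suminf:
  fixes f :: "nat \<Rightarrow> 'a::real_normed_vector"
  assumes "f sums s" "\<And>k. norm (f k) \<le> g k" "summable g"
  shows "norm s \<le> suminf g"
proof (rule LIMSEQ_le_const2[OF tendsto_norm[OF assms(1)[unfolded sums_def]]])
  have "norm (sum f {..<n}) \<le> sum g {..<n}" for n
    using norm_sum[of f "{..<n}"] sum_mono[of "{..<n}" "\<lambda>k. norm (f k)" g] assms(2) by fastforce
  moreover have "sum g {..<n} \<le> suminf g" for n
    using assms(2,3) by (intro sum_le_suminf) (auto intro: order_trans[OF norm_ge_zero])
  ultimately show "\<exists>N. \<forall>n\<ge>N. norm (sum f {..<n}) \<le> suminf g" by (meson order_trans)
qed

lemma sums_in_complete_subspace:
  fixes f :: "nat \<Rightarrow> 'a::real_normed_vector"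
  assumes "complete S" "subspace S" "\<And>k. norm (f k) \<le> g k" "summable g" "\<And>k. f k \<in> S"
  obtains s where "s \<in> S" "f sums s"
proof -
  define P where "P n = sum f {..<n}" for n
  define G where "G n = sum g {..<n}" for n
  have dist_P: "dist (P m) (P n) \<le> 1 * dist (G m) (G n)" if "m \<le> n" for m n
  proof -
    have "dist (P m) (P n) = norm (sum f {m..<n})"
      using sum_diff_nat_ivl[of 0 m n f] that
      by (subst dist_commute) (simp add: P_def dist_norm atLeast0LessThan)
    also have "\<dots> \<le> sum g {m..<n}" using norm_sum[of f] sum_mono assms(3) by (meson order_trans)
    also have "\<dots> = G n - G m"
      using sum_diff_nat_ivl[of 0 m n g] that by (simp add: G_def atLeast0LessThan)
    finally show ?thesis by (simp add: dist_real_def)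
  qed
  have "Cauchy G" using assms(4) unfolding G_def by (simp add: Cauchy_convergent_iff summable_iff_convergent)
  moreover have "dist (P m) (P n) \<le> 1 * dist (G m) (G n)" for m n
    using dist_P[of m n] dist_P[of n m] by (cases "m \<le> n") (simp_all add: dist_commute)
  ultimately have "Cauchy P" by (rule Cauchy_dist_le_mult)
  then obtain s where "s \<in> S" "P \<longlonglongrightarrow> s"
    using completeE[OF assms(1)] assms(2,5) by (metis P_def subspace_sum)
  then show thesis using that unfolding sums_def P_def by blast
qed

lemma binomial_div_power_le_inverse_fact: "real (n choose k) / real n ^ k \<le> 1 / fact k"
proof (cases "n = 0")
  case False
  have "real (n choose k) * fact k \<le> real n ^ k"
    using binomial_fact_pow[of n k] by (metis of_nat_fact of_nat_le_iff of_nat_mult of_nat_power)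
  then show ?thesis using False by (simp add: field_simps)
qed (cases k; simp)

lemma norm_add3_le:
  fixes x y z :: "'a::real_normed_vector"
  shows "norm (x + y + z) \<le> norm x + norm y + norm z"
  by (meson add_mono norm_triangle_ineq norm_triangle_le order_refl)

lemma tendsto_difference_quotient:
  fixes f :: "real \<Rightarrow> 'a::real_normed_vector"
  assumes "(f has_vector_derivative f') (at 0)"
  shows "((\<lambda>h. (f h - f 0) /\<^sub>R h) \<longlongrightarrow> f') (at 0)"
proof -
  have "(\<lambda>h. norm (f (0 + h) - f 0 - h *\<^sub>R f') / norm h) \<midarrow>0\<rightarrow> 0"
    using assms unfolding has_vector_derivative_def has_derivative_at by blast
  moreover have "\<forall>\<^sub>F h in at 0. norm ((f h - f 0) /\<^sub>R h - f') \<le> norm (f (0 + h) - f 0 - h *\<^sub>R f') / norm h"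
    unfolding eventually_at_filter
  proof (intro always_eventually allI impI)
    fix h :: real assume "h \<noteq> 0"
    then have "(f h - f 0) /\<^sub>R h - f' = (f h - f 0 - h *\<^sub>R f') /\<^sub>R h" by (simp add: algebra_simps)
    then show "norm ((f h - f 0) /\<^sub>R h - f') \<le> norm (f (0 + h) - f 0 - h *\<^sub>R f') / norm h"
      by (simp add: divide_inverse_commute)
  qed
  ultimately have "((\<lambda>h. (f h - f 0) /\<^sub>R h - f') \<longlongrightarrow> 0) (at 0)"
    by (rule Lim_null_comparison[rotated])
  then show ?thesis by (rule LIM_zero_cancel)
qed

lemma has_vector_derivative_imp_tendsto_scaled_diff:
  fixes f :: "real \<Rightarrow> 'a::real_normed_vector"
  assumes "(f has_vector_derivative f') (at 0)"
  shows "(\<lambda>n. real n *\<^sub>R (f (t / real n) - f 0)) \<longlonglongrightarrow> t *\<^sub>R f'"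
proof (cases "t = 0")
  case False
  have "filterlim (\<lambda>n. t / real n) (at 0) sequentially"
    using False by (intro filterlim_atI lim_const_over_n) (simp add: eventually_sequentiallyI[of 1])
  then have "(\<lambda>n. t *\<^sub>R ((f (t / real n) - f 0) /\<^sub>R (t / real n))) \<longlonglongrightarrow> t *\<^sub>R f'"
    by (intro tendsto_scaleR tendsto_const filterlim_compose[OF tendsto_difference_quotient[OF assms]])
  moreover have "\<forall>\<^sub>F n in sequentially. t *\<^sub>R ((f (t / real n) - f 0) /\<^sub>R (t / real n))
      = real n *\<^sub>R (f (t / real n) - f 0)"
    using False by (intro eventually_sequentiallyI[of 1]) simp
  ultimately show ?thesis by (rule Lim_transform_eventually)
qed simp

section \<open>The algebra of transformations of a system\<close>

locale opt_theory =
  fixes Th :: "('s, 't::real_normed_vector) opt"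
  assumes opt_axioms: "opt_axioms Th"
begin

lemma tens_triv_right: "tens Th A (triv Th) = A"
  using opt_axioms unfolding opt_axioms_def by (elim conjE) blast

lemma ident_transf: "ident Th A \<in> transf Th A A"
  using opt_axioms unfolding opt_axioms_def by (elim conjE) blast

lemma seq_transf: "T \<in> transf Th A B \<Longrightarrow> S \<in> transf Th B C \<Longrightarrow> seq Th S T \<in> transf Th A C"
  using opt_axioms unfolding opt_axioms_def by (elim conjE) blast

lemma par_transf: "T \<in> transf Th A B \<Longrightarrow> S \<in> transf Th C D \<Longrightarrow>
      par Th T S \<in> transf Th (tens Th A C) (tens Th B D)"
  using opt_axioms unfolding opt_axioms_def by (elim conjE) blast

lemma seq_ident_left: "T \<in> transf Th A B \<Longrightarrow> seq Th (ident Th B) T = T"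
  using opt_axioms unfolding opt_axioms_def by (elim conjE) blast

lemma seq_ident_right: "T \<in> transf Th A B \<Longrightarrow> seq Th T (ident Th A) = T"
  using opt_axioms unfolding opt_axioms_def by (elim conjE) blast

lemma seq_assoc: "T \<in> transf Th A B \<Longrightarrow> S \<in> transf Th B C \<Longrightarrow> R \<in> transf Th C D \<Longrightarrow>
      seq Th R (seq Th S T) = seq Th (seq Th R S) T"
  using opt_axioms unfolding opt_axioms_def by (elim conjE) fast

lemma par_seq_interchange:
  assumes "T \<in> transf Th A B" "S \<in> transf Th B C" "T' \<in> transf Th A' B'" "S' \<in> transf Th B' C'"
  shows "par Th (seq Th S T) (seq Th S' T') = seq Th (par Th S S') (par Th T T')"
proof -
  have "\<forall>A B C A' B' C' T T' S S'. T \<in> transf Th A B \<longrightarrow> S \<in> transf Th B C \<longrightarrow>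
          T' \<in> transf Th A' B' \<longrightarrow> S' \<in> transf Th B' C' \<longrightarrow>
          par Th (seq Th S T) (seq Th S' T') = seq Th (par Th S S') (par Th T T')"
    using opt_axioms unfolding opt_axioms_def by (elim conjE) assumption
  then show ?thesis using assms by blast
qed

lemma par_ident_triv: "T \<in> transf Th A B \<Longrightarrow> par Th T (ident Th (triv Th)) = T"
  using opt_axioms unfolding opt_axioms_def by (elim conjE) fast

lemma bilinear_seq: "bilinear (seq Th)"
  using opt_axioms unfolding opt_axioms_def by (elim conjE) blast

lemma tests_transf: "xs \<in> tests Th A B \<Longrightarrow> set xs \<subseteq> transf Th A B"
  using opt_axioms unfolding opt_axioms_def by (elim conjE) fast

lemma tests_triv_sum: "xs \<in> tests Th (triv Th) (triv Th) \<Longrightarrow> sum_list xs = ident Th (triv Th)"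
  using opt_axioms unfolding opt_axioms_def by (elim conjE) fast

lemma tests_seq: "xs \<in> tests Th A B \<Longrightarrow> ys \<in> tests Th B C \<Longrightarrow>
      [seq Th y x. x \<leftarrow> xs, y \<leftarrow> ys] \<in> tests Th A C"
  using opt_axioms unfolding opt_axioms_def by (elim conjE) fast

lemma transf_finite_span: "\<exists>F. finite F \<and> transf Th A B \<subseteq> span F"
  using opt_axioms unfolding opt_axioms_def by (elim conjE) fast

lemma closed_transf: "closed (transf Th A B)"
  using opt_axioms unfolding opt_axioms_def by (elim conjE) fast

lemma det_transf: "T \<in> det Th A B \<Longrightarrow> T \<in> transf Th A B"
  using tests_transf[of "[T]" A B] unfolding det_def by simp

lemma linear_seq_left: "linear (\<lambda>x. seq Th x y)"
  and linear_seq_right: "linear (seq Th x)"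
  using bilinear_seq unfolding bilinear_def by blast+

lemmas seq_simps = bilinear_ladd[OF bilinear_seq] bilinear_radd[OF bilinear_seq]
  bilinear_lmul[OF bilinear_seq] bilinear_rmul[OF bilinear_seq]
  bilinear_lsub[OF bilinear_seq] bilinear_rsub[OF bilinear_seq]
  bilinear_lzero[OF bilinear_seq] bilinear_rzero[OF bilinear_seq]

abbreviation transfR :: "'s \<Rightarrow> 't set" where
  "transfR A \<equiv> span (transf Th A A)"

lemma transfR_basis:
  obtains B where "finite B" "independent B" "span B = transfR A"
proof -
  obtain F where F: "finite F" "transf Th A A \<subseteq> span F" using transf_finite_span by blast
  obtain B where B: "B \<subseteq> transfR A" "independent B" "transfR A \<subseteq> span B"
    using maximal_independent_subset[of "transfR A"] by blast
  have "transfR A \<subseteq> span F" using span_mono[OF F(2)] by (simp add: span_span)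
  then have "finite B" using independent_span_bound[OF F(1) B(2)] B(1) by blast
  moreover have "span B = transfR A" using B span_minimal[OF B(1)] by auto
  ultimately show thesis using B(2) that by blast
qed

lemma complete_transfR: "complete (transfR A)"
  by (metis transfR_basis complete_span_finite)

lemma seq_transfR:
  assumes "x \<in> transfR A" and "y \<in> transfR A"
  shows "seq Th x y \<in> transfR A"
proof -
  have left: "seq Th x' y' \<in> transfR A" if "x' \<in> transfR A" "y' \<in> transf Th A A" for x' y'
    using that(1)
  proof (induction x' rule: span_induct_alt)
    case (step c x' w)
    then show ?case using seq_transf[OF that(2)] by (simp add: seq_simps span_add span_scale span_base)
  qed (simp add: seq_simps span_zero)
  from assms(2) show ?thesis
  proof (induction y rule: span_induct_alt)
    case (step c y z)
    then show ?case using left[OF assms(1)] by (simp add: seq_simps span_add span_scale)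
  qed (simp add: seq_simps span_zero)
qed

lemma seq_ident_left_transfR: "x \<in> transfR A \<Longrightarrow> seq Th (ident Th A) x = x"
  using real_vector.linear_eq_on[OF linear_seq_right linear_id, of x "transf Th A A"]
  by (simp add: seq_ident_left)

lemma seq_ident_right_transfR: "x \<in> transfR A \<Longrightarrow> seq Th x (ident Th A) = x"
  using real_vector.linear_eq_on[OF linear_seq_left linear_id, of x "transf Th A A"]
  by (simp add: seq_ident_right)

lemma seq_assoc_transfR:
  assumes "x \<in> transfR A" "y \<in> transfR A" "z \<in> transfR A"
  shows "seq Th x (seq Th y z) = seq Th (seq Th x y) z"
proof -
  have bil: "bilinear (\<lambda>x y. seq Th x (seq Th y z))" "bilinear (\<lambda>x y. seq Th (seq Th x y) z)" for z
    by (auto simp: bilinear_def seq_simps intro!: linearI)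
  have "seq Th x (seq Th y z) = seq Th (seq Th x y) z" if "z \<in> transf Th A A" for z
    by (rule bilinear_eq[OF bil order_refl order_refl assms(1,2)]) (use that seq_assoc in blast)
  then show ?thesis
    by (intro real_vector.linear_eq_on[OF _ _ assms(3), of "\<lambda>z. seq Th x (seq Th y z)" "seq Th (seq Th x y)"])
      (auto simp: seq_simps intro!: linearI)
qed

definition seq_bound :: "'s \<Rightarrow> real" where
  "seq_bound A = (SOME K. K \<ge> 1 \<and>
     (\<forall>x\<in>transfR A. \<forall>y\<in>transfR A. norm (seq Th x y) \<le> K * norm x * norm y))"

lemma
  shows seq_bound_ge_1: "seq_bound A \<ge> 1"
    and norm_seq_le: "x \<in> transfR A \<Longrightarrow> y \<in> transfR A \<Longrightarrow>
      norm (seq Th x y) \<le> seq_bound A * norm x * norm y"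
proof -
  obtain B where B: "finite B" "span B = transfR A" by (rule transfR_basis)
  obtain K where K: "K \<ge> 0"
    "\<And>x y. x \<in> transfR A \<Longrightarrow> y \<in> transfR A \<Longrightarrow> norm (seq Th x y) \<le> K * norm x * norm y"
    using bilinear_bound_on_span_finite[OF B(1) bilinear_seq] B(2) by metis
  have "norm (seq Th x y) \<le> max K 1 * norm x * norm y" if "x \<in> transfR A" "y \<in> transfR A" for x y
    using K(2)[OF that] mult_right_mono[OF max.cobounded1[of K 1], of "norm x * norm y"]
    by (simp add: mult.assoc)
  then have "\<exists>K. K \<ge> 1 \<and> (\<forall>x\<in>transfR A. \<forall>y\<in>transfR A. norm (seq Th x y) \<le> K * norm x * norm y)"
    by (intro exI[of _ "max K 1"]) auto
  from someI_ex[OF this] show "seq_bound A \<ge> 1"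
    and "x \<in> transfR A \<Longrightarrow> y \<in> transfR A \<Longrightarrow> norm (seq Th x y) \<le> seq_bound A * norm x * norm y"
    unfolding seq_bound_def by blast+
qed

lemma tendsto_seq:
  assumes "(f \<longlongrightarrow> a) F" "(g \<longlongrightarrow> b) F"
    and "\<forall>\<^sub>F x in F. f x \<in> transfR A" "\<forall>\<^sub>F x in F. g x \<in> transfR A" "a \<in> transfR A" "b \<in> transfR A"
  shows "((\<lambda>x. seq Th (f x) (g x)) \<longlongrightarrow> seq Th a b) F"
proof -
  let ?K = "seq_bound A"
  have "\<forall>\<^sub>F x in F. norm (seq Th (f x) (g x) - seq Th a b)
          \<le> ?K * norm (f x - a) * norm (g x - b) + ?K * norm (f x - a) * norm b + ?K * norm a * norm (g x - b)"
    using assms(3,4)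
  proof eventually_elim
    case (elim x)
    have "seq Th (f x) (g x) - seq Th a b
        = seq Th (f x - a) (g x - b) + seq Th (f x - a) b + seq Th a (g x - b)"
      by (simp add: seq_simps algebra_simps)
    then show ?case
      using norm_seq_le[OF span_diff[OF elim(1) assms(5)] span_diff[OF elim(2) assms(6)]]
        norm_seq_le[OF span_diff[OF elim(1) assms(5)] assms(6)] norm_seq_le[OF assms(5) span_diff[OF elim(2) assms(6)]]
      by (smt (verit) norm_triangle_ineq)
  qed
  moreover have "((\<lambda>x. ?K * norm (f x - a) * norm (g x - b) + ?K * norm (f x - a) * norm b
      + ?K * norm a * norm (g x - b)) \<longlongrightarrow> 0) F"
    using tendsto_norm_zero[OF LIM_zero[OF assms(1)]] tendsto_norm_zero[OF LIM_zero[OF assms(2)]]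
    by (auto intro!: tendsto_add_zero tendsto_mult_right_zero tendsto_mult_left_zero tendsto_mult_zero)
  ultimately have "((\<lambda>x. seq Th (f x) (g x) - seq Th a b) \<longlongrightarrow> 0) F" by (rule Lim_null_comparison)
  then show ?thesis by (rule LIM_zero_cancel)
qed

lemma opow_transfR: "x \<in> transfR A \<Longrightarrow> opow Th A x n \<in> transfR A"
  by (induction n) (simp_all add: span_base ident_transf seq_transfR)

lemma opow_transf: "x \<in> transf Th A A \<Longrightarrow> opow Th A x n \<in> transf Th A A"
  by (induction n) (simp_all add: ident_transf seq_transf)

lemma opow_scaleR: "opow Th A (r *\<^sub>R x) n = r ^ n *\<^sub>R opow Th A x n"
  by (induction n) (simp_all add: seq_simps)

lemma seq_opow_commute:
  assumes "x \<in> transfR A" "y \<in> transfR A" "seq Th x y = seq Th y x"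
  shows "seq Th y (opow Th A x n) = seq Th (opow Th A x n) y"
proof (induction n)
  case 0
  then show ?case using assms(2) by (simp add: seq_ident_left_transfR seq_ident_right_transfR)
next
  case (Suc n)
  note assoc = seq_assoc_transfR[OF _ _ opow_transfR[OF assms(1)]]
  have "seq Th y (opow Th A x (Suc n)) = seq Th x (seq Th y (opow Th A x n))"
    using assoc[OF assms(2,1)] assoc[OF assms(1,2)] assms(3) by simp
  also have "\<dots> = seq Th (opow Th A x (Suc n)) y"
    using Suc seq_assoc_transfR[OF assms(1) opow_transfR[OF assms(1)] assms(2)] by simp
  finally show ?case .
qed

lemma opow_seq:
  assumes "x \<in> transfR A" "y \<in> transfR A" "seq Th x y = seq Th y x"
  shows "opow Th A (seq Th x y) n = seq Th (opow Th A x n) (opow Th A y n)"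
proof (induction n)
  case 0
  then show ?case by (simp add: seq_ident_left_transfR span_base ident_transf)
next
  case (Suc n)
  define X where "X = opow Th A x n"
  define Y where "Y = opow Th A y n"
  have XY: "X \<in> transfR A" "Y \<in> transfR A" unfolding X_def Y_def using opow_transfR assms by auto
  note assoc = seq_assoc_transfR
  have "opow Th A (seq Th x y) (Suc n) = seq Th x (seq Th y (seq Th X Y))"
    using Suc assoc[OF assms(1,2) seq_transfR[OF XY]] by (simp add: X_def Y_def)
  also have "seq Th y (seq Th X Y) = seq Th X (seq Th y Y)"
    using assoc[OF assms(2) XY] assoc[OF XY(1) assms(2) XY(2)] seq_opow_commute[OF assms]
    by (simp add: X_def)
  also have "seq Th x (seq Th X (seq Th y Y)) = seq Th (seq Th x X) (seq Th y Y)"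
    using assoc[OF assms(1) XY(1) seq_transfR[OF assms(2) XY(2)]] by simp
  finally show ?case by (simp add: X_def Y_def)
qed

lemma opow_ident_add:
  assumes "x \<in> transfR A"
  shows "opow Th A (ident Th A + x) n = (\<Sum>k\<le>n. real (n choose k) *\<^sub>R opow Th A x k)"
proof (induction n)
  case (Suc n)
  define P where "P = (\<Sum>k\<le>n. real (n choose k) *\<^sub>R opow Th A x k)"
  have "P \<in> transfR A" unfolding P_def by (intro span_sum span_scale opow_transfR assms)
  then have "opow Th A (ident Th A + x) (Suc n) = P + seq Th x P"
    using Suc by (simp add: P_def [symmetric] seq_simps seq_ident_left_transfR)
  also have "seq Th x P = (\<Sum>k\<le>n. real (n choose k) *\<^sub>R opow Th A x (Suc k))"
    by (simp add: P_def linear_sum[OF linear_seq_right] seq_simps)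
  finally show ?case unfolding sum_choose_Suc_scaleR P_def .
qed simp

lemma norm_opow_le:
  assumes "x \<in> transfR A"
  shows "norm (opow Th A x n) \<le> norm (ident Th A) * (seq_bound A * norm x) ^ n"
proof (induction n)
  case (Suc n)
  have "norm (opow Th A x (Suc n)) \<le> seq_bound A * norm x * norm (opow Th A x n)"
    using norm_seq_le[OF assms opow_transfR[OF assms]] by simp
  also have "\<dots> \<le> seq_bound A * norm x * (norm (ident Th A) * (seq_bound A * norm x) ^ n)"
    using Suc seq_bound_ge_1[of A] by (intro mult_left_mono) auto
  finally show ?case by (simp add: algebra_simps)
qed simp

lemma opt_exp_sums:
  assumes "Z \<in> transfR A"
  shows "(\<lambda>n. (1 / fact n) *\<^sub>R opow Th A Z n) sums opt_exp Th A Z"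
    and "opt_exp Th A Z \<in> transfR A"
proof -
  define r where "r = seq_bound A * norm Z"
  have "norm ((1 / fact n) *\<^sub>R opow Th A Z n) \<le> norm (ident Th A) * (r ^ n /\<^sub>R fact n)" for n
    using mult_left_mono[OF norm_opow_le[OF assms, of n], of "1 / fact n"]
    by (simp add: r_def divide_simps mult.commute)
  moreover have "summable (\<lambda>n. norm (ident Th A) * (r ^ n /\<^sub>R fact n))"
    by (intro summable_mult summable_exp_generic)
  ultimately obtain s where "s \<in> transfR A" "(\<lambda>n. (1 / fact n) *\<^sub>R opow Th A Z n) sums s"
    by (rule sums_in_complete_subspace[OF complete_transfR subspace_span])
      (use opow_transfR[OF assms] span_scale in blast)
  then show "(\<lambda>n. (1 / fact n) *\<^sub>R opow Th A Z n) sums opt_exp Th A Z" "opt_exp Th A Z \<in> transfR A"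
    by (auto simp: opt_exp_def sums_iff)
qed

subsection \<open>The product formula\<close>

lemma opow_ident_add_Suc:
  assumes "a \<in> transfR A"
  shows "opow Th A (ident Th A + a) (Suc n) = opow Th A (ident Th A + a) n + seq Th a (opow Th A (ident Th A + a) n)"
  using seq_ident_left_transfR[OF opow_transfR[of "ident Th A + a"]] assms
  by (simp add: seq_simps span_add span_base ident_transf)

lemma norm_opow_ident_add_le:
  assumes "b \<in> transfR A"
  shows "norm (opow Th A (ident Th A + b) n) \<le> norm (ident Th A) * (1 + seq_bound A * norm b) ^ n"
proof (induction n)
  case (Suc n)
  let ?P = "opow Th A (ident Th A + b) n"
  have "?P \<in> transfR A" by (intro opow_transfR span_add span_base ident_transf assms)
  have "norm (opow Th A (ident Th A + b) (Suc n)) \<le> norm ?P + norm (seq Th b ?P)"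
    unfolding opow_ident_add_Suc[OF assms] by (rule norm_triangle_ineq)
  also have "\<dots> \<le> norm ?P + seq_bound A * norm b * norm ?P"
    using norm_seq_le[OF assms \<open>?P \<in> transfR A\<close>] by simp
  also have "\<dots> = (1 + seq_bound A * norm b) * norm ?P" by (simp add: algebra_simps)
  also have "\<dots> \<le> (1 + seq_bound A * norm b) * (norm (ident Th A) * (1 + seq_bound A * norm b) ^ n)"
    using Suc seq_bound_ge_1[of A] by (intro mult_left_mono) auto
  finally show ?case by (simp add: algebra_simps)
qed simp

lemma norm_opow_ident_add_diff_le:
  assumes a: "a \<in> transfR A" and b: "b \<in> transfR A"
  defines "\<rho> \<equiv> 1 + seq_bound A * max (norm a) (norm b)"
  shows "norm (opow Th A (ident Th A + a) n - opow Th A (ident Th A + b) n)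
     \<le> real n * (seq_bound A * norm (a - b)) * norm (ident Th A) * \<rho> ^ n"
proof (induction n)
  case (Suc n)
  let ?K = "seq_bound A" and ?E = "norm (ident Th A)" and ?\<delta> = "norm (a - b)"
  define P where "P = opow Th A (ident Th A + a) n"
  define Q where "Q = opow Th A (ident Th A + b) n"
  have PQ: "P \<in> transfR A" "Q \<in> transfR A"
    unfolding P_def Q_def by (intro opow_transfR span_add span_base ident_transf a b)+
  have K: "0 \<le> ?K" using seq_bound_ge_1[of A] by linarith
  have \<rho>: "1 \<le> \<rho>" "1 + ?K * norm a \<le> \<rho>" "1 + ?K * norm b \<le> \<rho>"
    using K by (auto simp: \<rho>_def le_max_iff_disj intro: mult_left_mono)
  have "norm Q \<le> ?E * (1 + ?K * norm b) ^ n"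
    unfolding Q_def by (rule norm_opow_ident_add_le[OF b])
  also have "\<dots> \<le> ?E * \<rho> ^ n"
    using K by (intro mult_left_mono power_mono \<rho>(3)) auto
  finally have Q_le: "norm Q \<le> ?E * \<rho> ^ n" .
  have "opow Th A (ident Th A + a) (Suc n) - opow Th A (ident Th A + b) (Suc n)
      = (P - Q) + seq Th a (P - Q) + seq Th (a - b) Q"
    using opow_ident_add_Suc[OF a, of n] opow_ident_add_Suc[OF b, of n]
    by (simp add: P_def[symmetric] Q_def[symmetric] seq_simps del: opow.simps)
  then have "norm (opow Th A (ident Th A + a) (Suc n) - opow Th A (ident Th A + b) (Suc n))
      \<le> norm (P - Q) + ?K * norm a * norm (P - Q) + ?K * ?\<delta> * norm Q"
    using norm_add3_le[of "P - Q" "seq Th a (P - Q)" "seq Th (a - b) Q"]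
      norm_seq_le[OF a span_diff[OF PQ]] norm_seq_le[OF span_diff[OF a b] PQ(2)]
    by simp
  also have "\<dots> \<le> \<rho> * norm (P - Q) + \<rho> * (?K * ?\<delta> * ?E * \<rho> ^ n)"
  proof (rule add_mono)
    show "norm (P - Q) + ?K * norm a * norm (P - Q) \<le> \<rho> * norm (P - Q)"
      using mult_right_mono[OF \<rho>(2) norm_ge_zero[of "P - Q"]] by (simp add: algebra_simps)
    have "?K * ?\<delta> * norm Q \<le> ?K * ?\<delta> * (?E * \<rho> ^ n)"
      using K Q_le by (intro mult_left_mono) auto
    also have "\<dots> \<le> \<rho> * (?K * ?\<delta> * ?E * \<rho> ^ n)"
      using K \<rho>(1) mult_right_mono[OF \<rho>(1), of "?K * ?\<delta> * ?E * \<rho> ^ n"] by simp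
    finally show "?K * ?\<delta> * norm Q \<le> \<rho> * (?K * ?\<delta> * ?E * \<rho> ^ n)" .
  qed
  also have "\<dots> \<le> \<rho> * (real n * (?K * ?\<delta>) * ?E * \<rho> ^ n) + \<rho> * (?K * ?\<delta> * ?E * \<rho> ^ n)"
    using Suc \<rho>(1) by (simp add: P_def Q_def)
  also have "\<dots> = real (Suc n) * (?K * ?\<delta>) * ?E * \<rho> ^ Suc n" by (simp add: algebra_simps)
  finally show ?case .
qed simp

lemma norm_opt_exp_diff_opow_le:
  assumes Z: "Z \<in> transfR A" and n: "n > 0"
  shows "norm (opt_exp Th A Z - opow Th A (ident Th A + (1 / real n) *\<^sub>R Z) n)
     \<le> norm (ident Th A) * (exp (seq_bound A * norm Z) - (1 + seq_bound A * norm Z / real n) ^ n)"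
proof -
  define r where "r = seq_bound A * norm Z"
  define E where "E = norm (ident Th A)"
  define b where "b k = (if k \<le> n then real (n choose k) / real n ^ k else 0)" for k
  have b_le: "b k \<le> 1 / fact k" for k
    using binomial_div_power_le_inverse_fact[of n k] by (simp add: b_def)
  have "opow Th A (ident Th A + (1 / real n) *\<^sub>R Z) n = (\<Sum>k\<le>n. b k *\<^sub>R opow Th A Z k)"
    unfolding opow_ident_add[OF span_scale[OF Z]] opow_scaleR
    by (intro sum.cong refl) (simp add: b_def power_one_over)
  moreover have "(\<lambda>k. b k *\<^sub>R opow Th A Z k) sums (\<Sum>k\<le>n. b k *\<^sub>R opow Th A Z k)"
    by (rule sums_finite) (auto simp: b_def)
  ultimately have diff_sums: "(\<lambda>k. (1 / fact k - b k) *\<^sub>R opow Th A Z k) sums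
      (opt_exp Th A Z - opow Th A (ident Th A + (1 / real n) *\<^sub>R Z) n)"
    using sums_diff[OF opt_exp_sums(1)[OF Z]] by (simp add: scaleR_diff_left)
  have diff_le: "norm ((1 / fact k - b k) *\<^sub>R opow Th A Z k) \<le> (1 / fact k - b k) * (E * r ^ k)" for k
    using b_le[of k] mult_left_mono[OF norm_opow_le[OF Z, of k], of "1 / fact k - b k"]
    by (simp add: E_def r_def)
  have "(\<lambda>k. E * (r ^ k /\<^sub>R fact k)) sums (E * exp r)" by (intro sums_mult exp_converges)
  moreover have "(\<lambda>k. E * (b k * r ^ k)) sums (E * (1 + r / real n) ^ n)"
  proof -
    have "(\<lambda>k. E * (b k * r ^ k)) sums (\<Sum>k\<le>n. E * (b k * r ^ k))"
      by (rule sums_finite) (auto simp: b_def)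
    also have "(\<Sum>k\<le>n. E * (b k * r ^ k)) = E * (r / real n + 1) ^ n"
      unfolding binomial_ring sum_distrib_left by (intro sum.cong refl) (simp add: b_def power_divide)
    finally show ?thesis by (simp add: add.commute)
  qed
  ultimately have "(\<lambda>k. E * (r ^ k /\<^sub>R fact k) - E * (b k * r ^ k))
      sums (E * exp r - E * (1 + r / real n) ^ n)"
    by (rule sums_diff)
  moreover have "(\<lambda>k. E * (r ^ k /\<^sub>R fact k) - E * (b k * r ^ k)) = (\<lambda>k. (1 / fact k - b k) * (E * r ^ k))"
    by (simp add: fun_eq_iff field_simps)
  ultimately have g_sums: "(\<lambda>k. (1 / fact k - b k) * (E * r ^ k)) sums (E * (exp r - (1 + r / real n) ^ n))"
    by (simp add: right_diff_distrib)
  show ?thesis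
    using norm_sums_le_suminf[OF diff_sums diff_le sums_summable[OF g_sums]] sums_unique[OF g_sums]
    by (simp only: E_def r_def)
qed

lemma norm_opow_ident_add_scaled_diff_le:
  assumes a: "a \<in> transfR A" and b: "b \<in> transfR A" and n: "n > 0"
    and R: "norm a \<le> R" "norm b \<le> R"
  shows "norm (opow Th A (ident Th A + (1 / real n) *\<^sub>R a) n - opow Th A (ident Th A + (1 / real n) *\<^sub>R b) n)
     \<le> seq_bound A * norm (ident Th A) * exp (seq_bound A * R) * norm (a - b)"
proof -
  let ?K = "seq_bound A"
  have K: "?K \<ge> 1" by (rule seq_bound_ge_1)
  let ?m = "max (norm ((1 / real n) *\<^sub>R a)) (norm ((1 / real n) *\<^sub>R b))"
  have "?m \<le> R / real n"
    using R n by (simp add: divide_right_mono)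
  then have "?K * ?m \<le> ?K * (R / real n)" using K by (intro mult_left_mono) auto
  moreover have "0 \<le> ?K * ?m" using K by (intro mult_nonneg_nonneg) (auto simp: le_max_iff_disj)
  ultimately have "(1 + ?K * ?m) ^ n \<le> (1 + ?K * R / real n) ^ n"
    by (intro power_mono) auto
  also have "\<dots> \<le> exp (?K * R)"
  proof (rule exp_ge_one_plus_x_over_n_power_n)
    have "0 \<le> R" using R(1) norm_ge_zero[of a] by linarith
    then show "- real n \<le> ?K * R" using K by (smt (verit) mult_nonneg_nonneg of_nat_0_le_iff)
  qed (use n in auto)
  finally have \<rho>: "(1 + ?K * ?m) ^ n \<le> exp (?K * R)" .
  have "norm (opow Th A (ident Th A + (1 / real n) *\<^sub>R a) n - opow Th A (ident Th A + (1 / real n) *\<^sub>R b) n)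
      \<le> real n * (?K * norm ((1 / real n) *\<^sub>R a - (1 / real n) *\<^sub>R b)) * norm (ident Th A) * (1 + ?K * ?m) ^ n"
    by (rule norm_opow_ident_add_diff_le[OF span_scale[OF a] span_scale[OF b]])
  also have "real n * (?K * norm ((1 / real n) *\<^sub>R a - (1 / real n) *\<^sub>R b)) * norm (ident Th A)
      = ?K * norm (ident Th A) * norm (a - b)"
    using n by (simp flip: scaleR_diff_right)
  also have "?K * norm (ident Th A) * norm (a - b) * (1 + ?K * ?m) ^ n
      \<le> ?K * norm (ident Th A) * norm (a - b) * exp (?K * R)"
    using K by (intro mult_left_mono[OF \<rho>]) auto
  finally show ?thesis by (simp add: mult_ac)
qed

lemma opow_tendsto_opt_exp:
  assumes Z: "Z \<in> transfR A" and Y: "\<And>n. Y n \<in> transfR A"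
    and lim: "(\<lambda>n. real n *\<^sub>R (Y n - ident Th A)) \<longlonglongrightarrow> Z"
  shows "(\<lambda>n. opow Th A (Y n) n) \<longlonglongrightarrow> opt_exp Th A Z"
proof -
  define Zn where "Zn n = real n *\<^sub>R (Y n - ident Th A)" for n
  have Zn: "Zn n \<in> transfR A" for n unfolding Zn_def by (intro span_scale span_diff Y span_base ident_transf)
  have Zn_lim: "Zn \<longlonglongrightarrow> Z" using lim unfolding Zn_def .
  obtain R where R: "\<And>n. norm (Zn n) \<le> R" "norm Z \<le> R"
  proof -
    obtain R0 where "\<forall>n. norm (Zn n) \<le> R0"
      using convergent_imp_Bseq[OF convergentI[OF Zn_lim]] by (rule BseqE)
    then show thesis by (intro that[of "max R0 (norm Z)"]) (auto simp: le_max_iff_disj)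
  qed
  let ?K = "seq_bound A" and ?E = "norm (ident Th A)"
  let ?r = "?K * norm Z"
  have bound: "norm (opow Th A (Y n) n - opt_exp Th A Z)
      \<le> ?K * ?E * exp (?K * R) * norm (Zn n - Z) + ?E * (exp ?r - (1 + ?r / real n) ^ n)" if "n > 0" for n
  proof -
    have Yn: "Y n = ident Th A + (1 / real n) *\<^sub>R Zn n" using that by (simp add: Zn_def)
    show ?thesis unfolding Yn
      by (rule norm_diff_triangle_le[OF norm_opow_ident_add_scaled_diff_le[OF Zn Z that R]])
        (use norm_opt_exp_diff_opow_le[OF Z that] in \<open>simp add: norm_minus_commute\<close>)
  qed
  have "(\<lambda>n. ?K * ?E * exp (?K * R) * norm (Zn n - Z) + ?E * (exp ?r - (1 + ?r / real n) ^ n)) \<longlonglongrightarrow> 0"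
    using tendsto_diff[OF tendsto_const tendsto_exp_limit_sequentially, of "exp ?r" ?r]
    by (intro tendsto_add_zero tendsto_mult_right_zero tendsto_norm_zero LIM_zero Zn_lim) simp_all
  then have "(\<lambda>n. opow Th A (Y n) n - opt_exp Th A Z) \<longlonglongrightarrow> 0"
    by (rule Lim_null_comparison[rotated]) (use bound in \<open>auto simp: eventually_sequentially intro!: exI[of _ 1]\<close>)
  then show ?thesis by (rule LIM_zero_cancel)
qed

lemma opt_exp_zero: "opt_exp Th A 0 = ident Th A"
proof -
  have "(\<lambda>n. (1 / fact n) *\<^sub>R opow Th A 0 n) = (\<lambda>n. if n = 0 then ident Th A else 0)"
    by (rule ext, case_tac n) (simp_all add: seq_simps)
  then show ?thesis
    using sums_unique[OF sums_single[of 0 "\<lambda>_. ident Th A"]] by (simp add: opt_exp_def)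
qed

lemma opow_ident_add_tendsto_opt_exp:
  assumes "G \<in> transfR A"
  shows "(\<lambda>n. opow Th A (ident Th A + (s / real n) *\<^sub>R G) n) \<longlonglongrightarrow> opt_exp Th A (s *\<^sub>R G)"
proof (rule opow_tendsto_opt_exp)
  have "\<forall>\<^sub>F n in sequentially. s *\<^sub>R G = real n *\<^sub>R (ident Th A + (s / real n) *\<^sub>R G - ident Th A)"
    by (rule eventually_sequentiallyI[of 1]) simp
  then show "(\<lambda>n. real n *\<^sub>R (ident Th A + (s / real n) *\<^sub>R G - ident Th A)) \<longlonglongrightarrow> s *\<^sub>R G"
    by (rule Lim_transform_eventually[OF tendsto_const])
qed (intro span_add span_scale span_base ident_transf assms)+

lemma opt_exp_add:
  assumes G: "G \<in> transfR A"
  shows "opt_exp Th A ((s + t) *\<^sub>R G) = seq Th (opt_exp Th A (s *\<^sub>R G)) (opt_exp Th A (t *\<^sub>R G))"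
proof -
  have seq_line: "seq Th (ident Th A + \<alpha> *\<^sub>R G) (ident Th A + \<beta> *\<^sub>R G)
      = ident Th A + (\<alpha> + \<beta>) *\<^sub>R G + (\<alpha> * \<beta>) *\<^sub>R seq Th G G" for \<alpha> \<beta>
    using seq_ident_left_transfR[OF G] seq_ident_right_transfR[OF G]
      seq_ident_left_transfR[OF span_base[OF ident_transf]]
    by (simp add: seq_simps algebra_simps scaleR_add_left)
  define a where "a n = ident Th A + (s / real n) *\<^sub>R G" for n
  define b where "b n = ident Th A + (t / real n) *\<^sub>R G" for n
  have ab: "a n \<in> transfR A" "b n \<in> transfR A" for n
    unfolding a_def b_def by (intro span_add span_scale span_base ident_transf G)+
  have commute: "seq Th (a n) (b n) = seq Th (b n) (a n)" for n
    unfolding a_def b_def seq_line by (simp add: algebra_simps)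
  have "(\<lambda>n. opow Th A (a n) n) \<longlonglongrightarrow> opt_exp Th A (s *\<^sub>R G)"
    and "(\<lambda>n. opow Th A (b n) n) \<longlonglongrightarrow> opt_exp Th A (t *\<^sub>R G)"
    unfolding a_def b_def by (rule opow_ident_add_tendsto_opt_exp[OF G])+
  then have "(\<lambda>n. seq Th (opow Th A (a n) n) (opow Th A (b n) n))
      \<longlonglongrightarrow> seq Th (opt_exp Th A (s *\<^sub>R G)) (opt_exp Th A (t *\<^sub>R G))"
    by (rule tendsto_seq[where A = A])
      (simp_all add: always_eventually opow_transfR ab opt_exp_sums(2) span_scale G)
  moreover have "(\<lambda>n. opow Th A (seq Th (a n) (b n)) n) \<longlonglongrightarrow> opt_exp Th A ((s + t) *\<^sub>R G)"
  proof (rule opow_tendsto_opt_exp)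
    have "(\<lambda>n. (s + t) *\<^sub>R G + (s * t / real n) *\<^sub>R seq Th G G) \<longlonglongrightarrow> (s + t) *\<^sub>R G"
      using tendsto_add[OF tendsto_const[of "(s + t) *\<^sub>R G"]
          tendsto_scaleR[OF lim_const_over_n[of "s * t"] tendsto_const[of "seq Th G G"]]]
      by simp
    moreover have "\<forall>\<^sub>F n in sequentially. (s + t) *\<^sub>R G + (s * t / real n) *\<^sub>R seq Th G G
        = real n *\<^sub>R (seq Th (a n) (b n) - ident Th A)"
    proof (rule eventually_sequentiallyI[of 1])
      fix n :: nat assume "1 \<le> n"
      then have "real n * (s / real n + t / real n) = s + t" "real n * (s / real n * (t / real n)) = s * t / real n"
        by (simp_all add: field_simps)
      then show "(s + t) *\<^sub>R G + (s * t / real n) *\<^sub>R seq Th G G = real n *\<^sub>R (seq Th (a n) (b n) - ident Th A)"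
        by (simp add: a_def b_def seq_line scaleR_add_right)
    qed
    ultimately show "(\<lambda>n. real n *\<^sub>R (seq Th (a n) (b n) - ident Th A)) \<longlonglongrightarrow> (s + t) *\<^sub>R G"
      by (rule Lim_transform_eventually)
  qed (intro span_scale seq_transfR ab G)+
  ultimately show ?thesis by (simp add: opow_seq[OF ab commute] LIMSEQ_unique)
qed

lemma norm_opt_exp_diff_ident_le:
  assumes "Z \<in> transfR A"
  shows "norm (opt_exp Th A Z - ident Th A)
    \<le> norm Z + norm (ident Th A) * (exp (seq_bound A * norm Z) - (1 + seq_bound A * norm Z))"
proof -
  have "opow Th A (ident Th A + Z) 1 = ident Th A + Z"
    using seq_ident_right_transfR[OF span_add[OF span_base[OF ident_transf] assms]] by simp
  then have "norm (opt_exp Th A Z - (ident Th A + Z))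
      \<le> norm (ident Th A) * (exp (seq_bound A * norm Z) - (1 + seq_bound A * norm Z))"
    using norm_opt_exp_diff_opow_le[OF assms, of 1] by simp
  then show ?thesis using norm_triangle_ineq[of "opt_exp Th A Z - (ident Th A + Z)" Z] by simp
qed

lemma continuous_on_opt_exp:
  assumes G: "G \<in> transfR A"
  shows "continuous_on UNIV (\<lambda>t. opt_exp Th A (t *\<^sub>R G))"
proof -
  let ?U = "\<lambda>t. opt_exp Th A (t *\<^sub>R G)"
  have U: "?U t \<in> transfR A" for t by (intro opt_exp_sums(2) span_scale G)
  let ?K = "seq_bound A" and ?E = "norm (ident Th A)"
  define g where "g h = \<bar>h\<bar> * norm G + ?E * (exp (?K * (\<bar>h\<bar> * norm G)) - (1 + ?K * (\<bar>h\<bar> * norm G)))"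
    for h
  have "(g \<longlongrightarrow> g 0) (at 0)" unfolding g_def by (intro tendsto_intros)
  then have "(g \<longlongrightarrow> 0) (at 0)" by (simp add: g_def)
  moreover have "\<forall>\<^sub>F h in at 0. norm (?U h - ident Th A) \<le> g h"
    using norm_opt_exp_diff_ident_le[OF span_scale[OF G]] by (intro always_eventually allI) (simp add: g_def)
  ultimately have "((\<lambda>h. ?U h - ident Th A) \<longlongrightarrow> 0) (at 0)"
    by (rule Lim_null_comparison[rotated])
  then have U0: "?U \<midarrow>0\<rightarrow> ident Th A" by (rule LIM_zero_cancel)
  have "isCont ?U t" for t
  proof -
    have "((\<lambda>h. seq Th (?U t) (?U h)) \<longlongrightarrow> seq Th (?U t) (ident Th A)) (at 0)"
      by (rule tendsto_seq[OF tendsto_const U0, where A = A]) (simp_all add: always_eventually U span_base ident_transf)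
    then show ?thesis
      by (simp add: isCont_iff opt_exp_add[OF G, symmetric] seq_ident_right_transfR[OF U])
  qed
  then show ?thesis by (simp add: continuous_at_imp_continuous_on)
qed

subsection \<open>Differentiability of continuous one-parameter subgroups\<close>

lemma one_param_subgroup_transf: "one_param_subgroup Th A S \<Longrightarrow> S t \<in> transf Th A A"
  by (simp add: one_param_subgroup_def rev_group_def)

lemma one_param_subgroup_zero:
  assumes "one_param_subgroup Th A S"
  shows "S 0 = ident Th A"
proof -
  have S0: "S 0 \<in> transf Th A A" by (rule one_param_subgroup_transf[OF assms])
  obtain R where R: "R \<in> transf Th A A" "seq Th R (S 0) = ident Th A"
    using assms unfolding one_param_subgroup_def rev_group_def by blast
  have "seq Th (S 0) (S 0) = S 0" using assms unfolding one_param_subgroup_def by (metis add_0)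
  then have "ident Th A = seq Th (seq Th R (S 0)) (S 0)"
    using R(2) seq_assoc[OF S0 S0 R(1)] by simp
  also have "\<dots> = S 0" using R(2) seq_ident_left[OF S0] by simp
  finally show ?thesis ..
qed

lemma seq_right_inverse_near_ident:
  assumes P: "P \<in> transfR A" and close: "seq_bound A * norm (P - ident Th A) < 1"
  obtains N where "N \<in> transfR A" "seq Th P N = ident Th A"
proof -
  obtain B where B: "finite B" "independent B" "span B = transfR A" by (rule transfR_basis)
  have "inj_on (seq Th P) (transfR A)"
  proof (rule inj_onI)
    fix x y assume x: "x \<in> transfR A" and y: "y \<in> transfR A" and "seq Th P x = seq Th P y"
    then have "x - y = seq Th (ident Th A - P) (x - y)"
      by (simp add: seq_simps seq_ident_left_transfR span_diff)
    then have "norm (x - y) \<le> seq_bound A * norm (P - ident Th A) * norm (x - y)"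
      using norm_seq_le[OF span_diff[OF span_base[OF ident_transf] P] span_diff[OF x y]]
      by (simp add: norm_minus_commute)
    then have "(1 - seq_bound A * norm (P - ident Th A)) * norm (x - y) \<le> 0"
      by (simp add: algebra_simps)
    then show "x = y" using close by (simp add: mult_le_0_iff)
  qed
  then have "seq Th P ` transfR A = transfR A"
    using linear_inj_on_span_imp_surj_on[OF B(1,2) linear_seq_right] seq_transfR[OF P] B(3) by auto
  then have "ident Th A \<in> seq Th P ` transfR A" by (simp add: span_base ident_transf)
  then obtain N where "N \<in> transfR A" "ident Th A = seq Th P N" by (rule imageE)
  then show thesis using that by simp
qed

lemma one_param_subgroup_average_invertible:
  assumes S: "one_param_subgroup Th A S" and B: "finite B" "independent B" "span B = transfR A"
  obtains h N where "0 < h" "N \<in> transfR A" "seq Th (span_integral B S 0 h) N = ident Th A"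
proof -
  have SB: "S s \<in> span B" for s using one_param_subgroup_transf[OF S] B(3) span_base by blast
  have "continuous_on UNIV S" using S by (simp add: one_param_subgroup_def)
  from tendsto_span_integral_average[OF B(1,2) this SB]
  have "((\<lambda>h. seq_bound A * norm ((1 / h) *\<^sub>R span_integral B S 0 h - ident Th A)) \<longlongrightarrow> 0) (at_right 0)"
    unfolding one_param_subgroup_zero[OF S] by (intro tendsto_mult_right_zero tendsto_norm_zero LIM_zero)
  then have "\<forall>\<^sub>F h in at_right 0. seq_bound A * norm ((1 / h) *\<^sub>R span_integral B S 0 h - ident Th A) < 1"
    by (rule order_tendstoD) simp
  then have "\<forall>\<^sub>F h in at_right 0.
      seq_bound A * norm ((1 / h) *\<^sub>R span_integral B S 0 h - ident Th A) < 1 \<and> 0 < h"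
    using eventually_at_right_less[of 0] by (rule eventually_conj)
  then obtain h where h: "seq_bound A * norm ((1 / h) *\<^sub>R span_integral B S 0 h - ident Th A) < 1" "0 < h"
    using eventually_happens'[OF trivial_limit_at_right_real] by blast
  have "span_integral B S 0 h \<in> transfR A" using span_integral_in_span[of B S 0 h] B(3) by simp
  then obtain N where "N \<in> transfR A" "seq Th ((1 / h) *\<^sub>R span_integral B S 0 h) N = ident Th A"
    using seq_right_inverse_near_ident[OF span_scale h(1)] by blast
  with h(2) show thesis using that[of h "(1 / h) *\<^sub>R N"] by (simp add: seq_simps span_scale)
qed

lemma one_param_subgroup_eq_span_integral:
  assumes S: "one_param_subgroup Th A S" and B: "finite B" "independent B" "span B = transfR A"
    and N: "N \<in> transfR A" "seq Th (span_integral B S 0 h) N = ident Th A"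
  shows "S t = span_integral B (\<lambda>s. seq Th (S s) N) t (t + h)"
proof -
  have SB: "S s \<in> span B" for s using one_param_subgroup_transf[OF S] B(3) span_base by blast
  have cont: "continuous_on UNIV S" and hom: "\<And>s. seq Th (S t) (S s) = S (s + t)"
    using S unfolding one_param_subgroup_def by (simp, metis add.commute)
  have St: "S t \<in> transfR A" and M: "span_integral B S 0 h \<in> transfR A"
    using SB[of t] span_integral_in_span[of B S 0 h] B(3) by simp_all
  have "S t = seq Th (S t) (seq Th (span_integral B S 0 h) N)"
    by (simp add: N(2) seq_ident_right_transfR[OF St])
  also have "\<dots> = seq Th (seq Th (S t) (span_integral B S 0 h)) N"
    by (rule seq_assoc_transfR[OF St M N(1)])
  also have "seq Th (S t) (span_integral B S 0 h) = span_integral B (\<lambda>s. seq Th (S t) (S s)) 0 h"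
    using B(3) SB seq_transfR by (intro span_integral_linear_image[OF B(1,2) cont SB linear_seq_right]) auto
  also have "\<dots> = span_integral B S t (t + h)"
    unfolding hom span_integral_shift by (simp add: add.commute)
  also have "seq Th (span_integral B S t (t + h)) N = span_integral B (\<lambda>s. seq Th (S s) N) t (t + h)"
    using B(3) N(1) SB seq_transfR by (intro span_integral_linear_image[OF B(1,2) cont SB linear_seq_left]) auto
  finally show ?thesis .
qed

lemma one_param_subgroup_has_vector_derivative:
  assumes S: "one_param_subgroup Th A S"
  obtains D where "D \<in> transfR A" "(S has_vector_derivative D) (at 0)"
proof -
  obtain B where B: "finite B" "independent B" "span B = transfR A" by (rule transfR_basis)
  obtain h N where h: "0 < h" and N: "N \<in> transfR A" "seq Th (span_integral B S 0 h) N = ident Th A"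
    by (rule one_param_subgroup_average_invertible[OF S B])
  let ?f = "\<lambda>s. seq Th (S s) N"
  have SB: "S s \<in> span B" for s using one_param_subgroup_transf[OF S] B(3) span_base by blast
  have fB: "?f s \<in> span B" for s using seq_transfR[OF _ N(1)] SB B(3) by simp
  have "continuous_on UNIV S" using S by (simp add: one_param_subgroup_def)
  then have "continuous_on UNIV ?f" by (rule continuous_on_linear_span_finite[OF B(1) linear_seq_left _ SB])
  then have "((\<lambda>t. span_integral B ?f t (t + h)) has_vector_derivative ?f (0 + h) - ?f 0) (at 0)"
    using h by (intro has_vector_derivative_span_integral_window[OF B(1,2) _ fB]) simp_all
  moreover have "S = (\<lambda>t. span_integral B ?f t (t + h))"
    using one_param_subgroup_eq_span_integral[OF S B N] by (rule ext)
  moreover have "?f (0 + h) - ?f 0 \<in> transfR A" using span_diff[OF fB fB] B(3) by simp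
  ultimately show thesis using that by simp
qed

definition sandwich :: "'s \<Rightarrow> 't \<Rightarrow> 't \<Rightarrow> 't \<Rightarrow> 't" where
  "sandwich A u \<sigma> Y = seq Th (par Th (ident Th A) u) (seq Th Y (par Th (ident Th A) \<sigma>))"

lemma linear_sandwich: "linear (sandwich A u \<sigma>)"
  unfolding sandwich_def by (rule linearI) (simp_all add: seq_simps)

lemma sandwich_transf:
  assumes "u \<in> transf Th A' (triv Th)" "\<sigma> \<in> transf Th (triv Th) A'"
    and "Y \<in> transf Th (tens Th A A') (tens Th A A')"
  shows "sandwich A u \<sigma> Y \<in> transf Th A A"
  using par_transf[OF ident_transf[of A] assms(1)] par_transf[OF ident_transf[of A] assms(2)] assms(3)
  unfolding sandwich_def tens_triv_right by (intro seq_transf)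

lemma sandwich_transfR:
  assumes "u \<in> transf Th A' (triv Th)" "\<sigma> \<in> transf Th (triv Th) A'"
    and "Y \<in> transfR (tens Th A A')"
  shows "sandwich A u \<sigma> Y \<in> transfR A"
proof -
  have "sandwich A u \<sigma> ` transf Th (tens Th A A') (tens Th A A') \<subseteq> transfR A"
    using sandwich_transf[OF assms(1,2)] by (auto intro: span_base)
  then have "span (sandwich A u \<sigma> ` transf Th (tens Th A A') (tens Th A A')) \<subseteq> transfR A"
    by (simp add: span_minimal)
  then show ?thesis using assms(3) by (auto simp: span_linear_image[OF linear_sandwich])
qed

lemma sandwich_ident:
  assumes "u \<in> det Th A' (triv Th)" "\<sigma> \<in> det Th (triv Th) A'"
  shows "sandwich A u \<sigma> (ident Th (tens Th A A')) = ident Th A"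
proof -
  have u: "u \<in> transf Th A' (triv Th)" and \<sigma>: "\<sigma> \<in> transf Th (triv Th) A'"
    using assms by (simp_all add: det_transf)
  have "[seq Th y x. x \<leftarrow> [\<sigma>], y \<leftarrow> [u]] \<in> tests Th (triv Th) (triv Th)"
    using assms by (intro tests_seq) (simp_all add: det_def)
  then have u\<sigma>: "seq Th u \<sigma> = ident Th (triv Th)" using tests_triv_sum by fastforce
  have "seq Th (par Th (ident Th A) u) (par Th (ident Th A) \<sigma>) = par Th (ident Th A) (ident Th (triv Th))"
    using par_seq_interchange[OF ident_transf[of A] ident_transf[of A] \<sigma> u]
    by (simp add: u\<sigma> seq_ident_left[OF ident_transf])
  also have "\<dots> = ident Th A" by (rule par_ident_triv[OF ident_transf])
  finally show ?thesis
    using par_transf[OF ident_transf[of A] \<sigma>]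
    by (simp add: sandwich_def tens_triv_right seq_ident_left)
qed

lemma collision_channel_eq_sandwich:
  "collision_channel Th A S u \<sigma> \<tau> = sandwich A u \<sigma> (S \<tau>)"
  by (simp add: collision_channel_def sandwich_def)

lemma collision_generator_eq_sandwich:
  "collision_generator Th A S u \<sigma> = sandwich A u \<sigma> (vector_derivative S (at 0))"
  by (simp add: collision_generator_def sandwich_def)

lemma collision_channel_transf:
  assumes "collision_model Th A A' S u" "\<sigma> \<in> det Th (triv Th) A'"
  shows "collision_channel Th A S u \<sigma> \<tau> \<in> transf Th A A"
  using assms unfolding collision_channel_eq_sandwich collision_model_def
  by (intro sandwich_transf[where A' = A'] one_param_subgroup_transf) (simp_all add: det_transf)

lemma collision_channel_power_tendsto:
  assumes model: "collision_model Th A A' S u" and \<sigma>: "\<sigma> \<in> det Th (triv Th) A'"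
  shows "collision_generator Th A S u \<sigma> \<in> transfR A"
    and "(\<lambda>n. opow Th A (collision_channel Th A S u \<sigma> (t / real n)) n)
           \<longlonglongrightarrow> opt_exp Th A (t *\<^sub>R collision_generator Th A S u \<sigma>)"
proof -
  let ?X = "tens Th A A'" and ?\<Phi> = "sandwich A u \<sigma>"
  have S: "one_param_subgroup Th ?X S" and u: "u \<in> det Th A' (triv Th)"
    using model by (simp_all add: collision_model_def)
  have uT: "u \<in> transf Th A' (triv Th)" and \<sigma>T: "\<sigma> \<in> transf Th (triv Th) A'"
    using u \<sigma> by (simp_all add: det_transf)
  obtain D where D: "D \<in> transfR ?X" "(S has_vector_derivative D) (at 0)"
    by (rule one_param_subgroup_has_vector_derivative[OF S])
  have G: "collision_generator Th A S u \<sigma> = ?\<Phi> D"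
    by (simp add: collision_generator_eq_sandwich vector_derivative_at[OF D(2)])
  show "collision_generator Th A S u \<sigma> \<in> transfR A"
    unfolding G by (rule sandwich_transfR[OF uT \<sigma>T D(1)])
  obtain B where B: "finite B" "span B = transfR ?X" by (rule transfR_basis)
  have SX: "S \<tau> \<in> transfR ?X" for \<tau> by (rule span_base[OF one_param_subgroup_transf[OF S]])
  have "(\<lambda>n. ?\<Phi> (real n *\<^sub>R (S (t / real n) - S 0))) \<longlonglongrightarrow> ?\<Phi> (t *\<^sub>R D)"
    using B(2) SX D(1)
    by (intro tendsto_linear_on_span_finite[OF B(1) linear_sandwich]
        has_vector_derivative_imp_tendsto_scaled_diff[OF D(2)] always_eventually allI)
      (simp_all add: span_scale span_diff)
  then have "(\<lambda>n. real n *\<^sub>R (collision_channel Th A S u \<sigma> (t / real n) - ident Th A))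
      \<longlonglongrightarrow> t *\<^sub>R collision_generator Th A S u \<sigma>"
    by (simp add: G collision_channel_eq_sandwich one_param_subgroup_zero[OF S] sandwich_ident[OF u \<sigma>]
        linear_scale[OF linear_sandwich] linear_diff[OF linear_sandwich])
  then show "(\<lambda>n. opow Th A (collision_channel Th A S u \<sigma> (t / real n)) n)
      \<longlonglongrightarrow> opt_exp Th A (t *\<^sub>R collision_generator Th A S u \<sigma>)"
    by (rule opow_tendsto_opt_exp[rotated 2])
      (simp_all add: span_scale span_base collision_channel_transf[OF model \<sigma>]
        \<open>collision_generator Th A S u \<sigma> \<in> transfR A\<close>)
qed

lemma opt_exp_one_param_subgroup:
  assumes G: "G \<in> transfR A" and transf: "\<And>t. opt_exp Th A (t *\<^sub>R G) \<in> transf Th A A"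
  shows "one_param_subgroup Th A (\<lambda>t. opt_exp Th A (t *\<^sub>R G))"
proof -
  have inverse: "seq Th (opt_exp Th A (s *\<^sub>R G)) (opt_exp Th A ((- s) *\<^sub>R G)) = ident Th A" for s
    using opt_exp_add[OF G, of s "- s", symmetric] opt_exp_zero by simp
  have "opt_exp Th A (t *\<^sub>R G) \<in> rev_group Th A" for t
    unfolding rev_group_def using transf inverse[of t] inverse[of "- t"]
    by (auto intro!: bexI[of _ "opt_exp Th A ((- t) *\<^sub>R G)"])
  then show ?thesis
    unfolding one_param_subgroup_def using opt_exp_add[OF G] continuous_on_opt_exp[OF G] by auto
qed

end

theorem theorem1:
  fixes Th :: "('s, 't::real_normed_vector) opt"
    and A A' :: 's and S :: "real \<Rightarrow> 't" and u \<sigma> :: 't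
  assumes "opt_axioms Th"
    and "collision_model Th A A' S u"
    and "\<sigma> \<in> det Th (triv Th) A'"
  shows "\<exists>U. (\<forall>t. (\<lambda>n. opow Th A (collision_channel Th A S u \<sigma> (t / real n)) n) \<longlonglongrightarrow> U t)
           \<and> one_param_subgroup Th A U
           \<and> (\<forall>t. U t = opt_exp Th A (t *\<^sub>R collision_generator Th A S u \<sigma>))"
proof -
  interpret opt_theory Th by (rule opt_theory.intro) fact
  define G where "G = collision_generator Th A S u \<sigma>"
  note G = collision_channel_power_tendsto[OF assms(2,3), folded G_def]
  have "opt_exp Th A (t *\<^sub>R G) \<in> transf Th A A" for t
    using closed_sequentially[OF closed_transf _ G(2)]
      opow_transf[OF collision_channel_transf[OF assms(2,3)]] by blast
  then have "one_param_subgroup Th A (\<lambda>t. opt_exp Th A (t *\<^sub>R G))"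
    by (rule opt_exp_one_param_subgroup[OF G(1)])
  then show ?thesis using G(2) by (intro exI[of _ "\<lambda>t. opt_exp Th A (t *\<^sub>R G)"]) (simp add: G_def)
qed

end
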